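(* Let $H=L^2([0,1])$ with orthonormal basis $(e_j)_{j\ge1}$. For each $n\ge4$, let $P=P_n$ be the $(n-2)\times n$ second-order differencing matrix acting componentwise on $H^n$, and let $\mathbf{X}=\mathbf{X}^{(n)}\in H^n$ follow the model $\mathbf{X}=\mathbf{Y}+\mathbf{U}$, $\mathbf{Y}=Y_0+P'(PP')^{-1}\mathbf{V}$, where $Y_0\in H^n$ is deterministic with $PY_0=0$; $\mathbf{U}_1,\dots,\mathbf{U}_n$ are i.i.d. centered Gaussian $H$-valued with covariance $\Sigma_u$; $\mathbf{V}_1,\dots,\mathbf{V}_{n-2}$ are i.i.d. centered Gaussian $H$-valued with covariance $\Sigma_v$; the family $(\mathbf{U}_r)$ is independent of $(\mathbf{V}_s)$; and $\Sigma_u,\Sigma_v$ (not depending on $n$) are self-adjoint, positive definite, trace class with $\Sigma_ue_j=\mu_je_j$, $\Sigma_ve_j=\tau_je_j$, $\mu_j,\tau_j>0$. For each $j$ write $PX^j(i)$ for the $i$-th component of $P\bar X^j\in\mathbb{R}^{n-2}$ and set $$\hat\mu_j(n)=-\frac{1}{4(n-3)}\sum_{i=1}^{n-3}PX^j(i)\,PX^j(i+1),\qquad \hat\tau_j(n)=\frac{1}{n-2}\sum_{i=1}^{n-2}PX^j(i)^2+\frac{3}{2(n-3)}\sum_{i=1}^{n-3}PX^j(i)\,PX^j(i+1),$$ and $\hat\Sigma_u(n)h=\sum_{j\ge1}\hat\mu_j(n)\langle h,e_j\rangle e_j$, $\hat\Sigma_v(n)h=\sum_{j\ge1}\hat\tau_j(n)\langle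 h,e_j\rangle e_j$. Then $\hat\Sigma_u(n)$ and $\hat\Sigma_v(n)$ are consistent estimators of $\Sigma_u$ and $\Sigma_v$: for every $h\in H$, $\hat\Sigma_u(n)h\to\Sigma_uh$ and $\hat\Sigma_v(n)h\to\Sigma_vh$ in probability in $H$ as $n\to\infty$.
   Context: For $\mathbf{Z}\in H^n$, $\bar Z^j=(\langle \mathbf{Z}_1,e_j\rangle,\dots,\langle \mathbf{Z}_n,e_j\rangle)\in\mathbb{R}^n$. $P$ has rows $(0,\dots,0,1,-2,1,0,\dots,0)$, so $PX^j(i)=x^j_{i+2}-2x^j_{i+1}+x^j_i$ where $x^j_i=\langle\mathbf{X}_i,e_j\rangle$. *)

theory Defs
  imports "HOL-Probability.Probability"
begin

definition orthonormal_basis :: "(nat \<Rightarrow> 'h::{real_inner,complete_space}) \<Rightarrow> bool" where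
  "orthonormal_basis e \<longleftrightarrow>
     (\<forall>i j. e i \<bullet> e j = (if i = j then 1 else 0)) \<and> closure (span (range e)) = UNIV"

text \<open>Second-order differencing matrix P_n, size (n-2) x n, 1-based indices
  (row i has 1, -2, 1 in columns i, i+1, i+2); zero outside the index ranges.\<close>
definition Pmat :: "nat \<Rightarrow> nat \<Rightarrow> nat \<Rightarrow> real" where
  "Pmat n i l = (if i \<in> {1..n-2} \<and> l \<in> {1..n} then
      (if l = i then 1 else if l = i + 1 then -2 else if l = i + 2 then 1 else 0) else 0)"

definition PPt :: "nat \<Rightarrow> nat \<Rightarrow> nat \<Rightarrow> real" where
  "PPt n i k = (\<Sum>l=1..n. Pmat n i l * Pmat n k l)"

definition PPt_inv :: "nat \<Rightarrow> nat \<Rightarrow> nat \<Rightarrow> real" where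
  "PPt_inv n = (THE G. (\<forall>i\<in>{1..n-2}. \<forall>k\<in>{1..n-2}.
        (\<Sum>l=1..n-2. G i l * PPt n l k) = (if i = k then 1 else 0))
      \<and> (\<forall>i k. (i \<notin> {1..n-2} \<or> k \<notin> {1..n-2}) \<longrightarrow> G i k = 0))"

definition Qmat :: "nat \<Rightarrow> nat \<Rightarrow> nat \<Rightarrow> real" where
  "Qmat n i s = (\<Sum>k=1..n-2. Pmat n k i * PPt_inv n k s)"

definition real_centered_gaussian :: "'a measure \<Rightarrow> ('a \<Rightarrow> real) \<Rightarrow> real \<Rightarrow> bool" where
  "real_centered_gaussian M Z v \<longleftrightarrow>
     (v = 0 \<and> (AE \<omega> in M. Z \<omega> = 0)) \<or>
     (v > 0 \<and> distributed M lborel Z (normal_density 0 (sqrt v)))"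

definition centered_gaussian :: "'a measure \<Rightarrow> ('a \<Rightarrow> 'h::{real_inner,complete_space})
      \<Rightarrow> ('h \<Rightarrow> 'h) \<Rightarrow> bool" where
  "centered_gaussian M X S \<longleftrightarrow> X \<in> borel_measurable M \<and>
     (\<forall>h. real_centered_gaussian M (\<lambda>\<omega>. X \<omega> \<bullet> h) (S h \<bullet> h))"

text \<open>Convergence in probability of Z n to a constant c (outer-probability form,
  so no measurability of the deviation events is presupposed).\<close>
definition conv_in_prob :: "'a measure \<Rightarrow> (nat \<Rightarrow> 'a \<Rightarrow> 'h::metric_space) \<Rightarrow> 'h \<Rightarrow> bool" where
  "conv_in_prob M Z c \<longleftrightarrow> (\<forall>\<epsilon>>0. \<forall>\<delta>>0. eventually (\<lambda>n.
      \<exists>A\<in>sets M. {\<omega>\<in>space M. dist (Z n \<omega>) c > \<epsilon>} \<subseteq> A \<and> measure M A < \<delta>) sequentially)"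

definition diag_cov_operator :: "(nat \<Rightarrow> 'h::{real_inner,complete_space}) \<Rightarrow> ('h \<Rightarrow> 'h) \<Rightarrow> (nat \<Rightarrow> real) \<Rightarrow> bool" where
  "diag_cov_operator e S lam \<longleftrightarrow> bounded_linear S \<and> (\<forall>x y. S x \<bullet> y = x \<bullet> S y)
     \<and> (\<forall>x. x \<noteq> 0 \<longrightarrow> S x \<bullet> x > 0) \<and> summable (\<lambda>j. S (e j) \<bullet> e j)
     \<and> (\<forall>j. S (e j) = lam j *\<^sub>R e j \<and> lam j > 0)"

definition PXc :: "nat \<Rightarrow> (nat \<Rightarrow> 'h::real_inner) \<Rightarrow> 'h \<Rightarrow> nat \<Rightarrow> real" where
  "PXc n X ej i = (\<Sum>l=1..n. Pmat n i l * (X l \<bullet> ej))"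

definition mu_hat :: "nat \<Rightarrow> (nat \<Rightarrow> 'h::real_inner) \<Rightarrow> 'h \<Rightarrow> real" where
  "mu_hat n X ej = - (1 / (4 * (real n - 3))) *
     (\<Sum>i=1..n-3. PXc n X ej i * PXc n X ej (i+1))"

definition tau_hat :: "nat \<Rightarrow> (nat \<Rightarrow> 'h::real_inner) \<Rightarrow> 'h \<Rightarrow> real" where
  "tau_hat n X ej = (1 / (real n - 2)) * (\<Sum>i=1..n-2. (PXc n X ej i)^2)
     + (3 / (2 * (real n - 3))) * (\<Sum>i=1..n-3. PXc n X ej i * PXc n X ej (i+1))"

end

theory Submission
  imports Defs "Jordan_Normal_Form.Determinant" "HOL-Real_Asymp.Real_Asymp"
begin

text \<open>
  Applying \<open>P\<close> annihilates \<open>Y\<^sub>0\<close> and, because \<open>P P'(P P')\<^sup>-\<^sup>1 = I\<close>, turns the \<open>j\<close>-th coordinates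
  into \<open>W\<^sub>i = u\<^sub>i - 2 u\<^sub>i\<^sub>+\<^sub>1 + u\<^sub>i\<^sub>+\<^sub>2 + v\<^sub>i\<close>, where \<open>u\<^sub>r = \<langle>U\<^sub>r, e\<^sub>j\<rangle>\<close> and \<open>v\<^sub>s = \<langle>V\<^sub>s, e\<^sub>j\<rangle>\<close> are independent
  centred normals with variances \<open>\<mu>\<^sub>j\<close> and \<open>\<tau>\<^sub>j\<close>. Then \<open>E W\<^sub>i W\<^sub>i\<^sub>+\<^sub>1 = -4 \<mu>\<^sub>j\<close> and
  \<open>E W\<^sub>i\<^sup>2 = 6 \<mu>\<^sub>j + \<tau>\<^sub>j\<close>, so both coordinate estimators are unbiased. Their centred summands are
  uncorrelated four or more steps apart and have second moments bounded through Gaussian fourth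
  moments, so each coordinate has mean-square error \<open>O((\<mu>\<^sub>j\<^sup>2 + \<tau>\<^sub>j\<^sup>2) / n)\<close>, uniformly in \<open>j\<close> since
  trace-class eigenvalues are bounded. By Parseval this gives \<open>E \<parallel>\<Sigma>\<^sub>n h - \<Sigma> h\<parallel>\<^sup>2 = O(\<parallel>h\<parallel>\<^sup>2 / n)\<close>,
  and Markov's inequality yields convergence in probability.
\<close>

no_notation scalar_prod (infix \<open>\<bullet>\<close> 70)

section \<open>The second-order differencing matrix\<close>

lemma Pmat_eq_0_if_less: "l < i \<Longrightarrow> Pmat n i l = 0"
  by (auto simp: Pmat_def)

lemma sum_Pmat_row:
  fixes f :: "nat \<Rightarrow> real"
  assumes "i \<in> {1..n-2}"
  shows "(\<Sum>l=1..n. Pmat n i l * f l) = f i - 2 * f (Suc i) + f (Suc (Suc i))"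
proof -
  have "(\<Sum>l=1..n. Pmat n i l * f l)
      = (\<Sum>l=1..n. (if l = i then f l else 0) + (if l = Suc i then - 2 * f l else 0)
                    + (if l = Suc (Suc i) then f l else 0))"
    using assms by (intro sum.cong) (auto simp: Pmat_def)
  moreover have "1 \<le> i" "Suc (Suc i) \<le> n"
    using assms by auto
  ultimately show ?thesis
    by (simp add: sum.distrib)
qed

lemma PPt_diag: "i \<in> {1..n-2} \<Longrightarrow> PPt n i i = 6"
  unfolding PPt_def by (subst sum_Pmat_row) (auto simp: Pmat_def)

lemma PPt_Suc: "i \<in> {1..n-2} \<Longrightarrow> Suc i \<in> {1..n-2} \<Longrightarrow> PPt n i (Suc i) = -4"
  unfolding PPt_def by (subst sum_Pmat_row) (auto simp: Pmat_def)

lemma PPt_quadratic_form: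
  fixes x :: "nat \<Rightarrow> real"
  shows "(\<Sum>i\<in>A. \<Sum>k\<in>A. x i * PPt n i k * x k) = (\<Sum>l=1..n. (\<Sum>i\<in>A. Pmat n i l * x i)^2)"
proof -
  have "(\<Sum>i\<in>A. \<Sum>k\<in>A. x i * PPt n i k * x k)
      = (\<Sum>i\<in>A. \<Sum>k\<in>A. \<Sum>l=1..n. (Pmat n i l * x i) * (Pmat n k l * x k))"
    unfolding PPt_def by (simp add: sum_distrib_left sum_distrib_right mult_ac)
  also have "\<dots> = (\<Sum>i\<in>A. \<Sum>l=1..n. \<Sum>k\<in>A. (Pmat n i l * x i) * (Pmat n k l * x k))"
    by (rule sum.cong[OF refl], rule sum.swap)
  also have "\<dots> = (\<Sum>l=1..n. \<Sum>i\<in>A. \<Sum>k\<in>A. (Pmat n i l * x i) * (Pmat n k l * x k))"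
    by (rule sum.swap)
  also have "\<dots> = (\<Sum>l=1..n. (\<Sum>i\<in>A. Pmat n i l * x i)^2)"
    by (simp add: power2_eq_square sum_product)
  finally show ?thesis .
qed

text \<open>The transpose \<open>P'\<close> is lower triangular with unit diagonal.\<close>

lemma Pmat_transpose_injective:
  fixes x :: "nat \<Rightarrow> real"
  assumes zero: "\<And>i. i \<notin> {1..n-2} \<Longrightarrow> x i = 0"
    and ker: "\<And>l. l \<in> {1..n} \<Longrightarrow> (\<Sum>i=1..n-2. Pmat n i l * x i) = 0"
  shows "x i = 0"
proof (induction i rule: less_induct)
  case (less l)
  show ?case
  proof (cases "l \<in> {1..n-2}")
    case True
    have "(\<Sum>i=1..n-2. Pmat n i l * x i) = (\<Sum>i=1..n-2. if i = l then x i else 0)"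
    proof (rule sum.cong)
      fix i assume "i \<in> {1..n-2}"
      then show "Pmat n i l * x i = (if i = l then x i else 0)"
        using True less.IH[of i] Pmat_eq_0_if_less[of l i n] by (cases i l rule: linorder_cases) (auto simp: Pmat_def)
    qed simp
    then show ?thesis
      using True ker[of l] by auto
  qed (use zero in blast)
qed

lemma PPt_kernel_trivial:
  fixes x :: "nat \<Rightarrow> real"
  assumes zero: "\<And>i. i \<notin> {1..n-2} \<Longrightarrow> x i = 0"
    and ker: "\<And>i. i \<in> {1..n-2} \<Longrightarrow> (\<Sum>k=1..n-2. PPt n i k * x k) = 0"
  shows "x i = 0"
proof (rule Pmat_transpose_injective[OF zero])
  have "(\<Sum>l=1..n. (\<Sum>i=1..n-2. Pmat n i l * x i)^2) = (\<Sum>i=1..n-2. \<Sum>k=1..n-2. x i * PPt n i k * x k)"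
    by (rule PPt_quadratic_form[symmetric])
  also have "\<dots> = (\<Sum>i=1..n-2. x i * (\<Sum>k=1..n-2. PPt n i k * x k))"
    by (simp add: sum_distrib_left mult.assoc)
  also have "\<dots> = 0"
    using ker by simp
  finally show "(\<Sum>i=1..n-2. Pmat n i l * x i) = 0" if "l \<in> {1..n}" for l
    using that by (subst (asm) sum_nonneg_eq_0_iff) auto
qed

lemma sum_atLeast1_shift: "(\<Sum>l=1..m. f l) = (\<Sum>p<m. f (Suc p))"
  using sum.atLeast1_atMost_eq[of f m] by simp

definition PPt_mat :: "nat \<Rightarrow> real mat" where
  "PPt_mat n = mat (n-2) (n-2) (\<lambda>(i, k). PPt n (Suc i) (Suc k))"

lemma det_PPt_mat_nonzero: "det (PPt_mat n) \<noteq> 0"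
proof
  let ?A = "PPt_mat n" and ?m = "n - 2"
  have A: "?A \<in> carrier_mat ?m ?m"
    by (simp add: PPt_mat_def)
  assume "det ?A = 0"
  then obtain v where v: "v \<in> carrier_vec ?m" "v \<noteq> 0\<^sub>v ?m" "?A *\<^sub>v v = 0\<^sub>v ?m"
    using det_0_iff_vec_prod_zero_field[OF A] by blast
  define x where "x l = (if l \<in> {1..?m} then v $ (l - 1) else 0)" for l
  have x0: "x l = 0" for l
  proof (rule PPt_kernel_trivial)
    show "i \<notin> {1..n-2} \<Longrightarrow> x i = 0" for i
      by (auto simp: x_def)
    fix i assume i: "i \<in> {1..n-2}"
    have "0 = (?A *\<^sub>v v) $ (i - 1)"
      using v i by auto
    also have "\<dots> = (\<Sum>p<?m. PPt n i (Suc p) * x (Suc p))"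
      using v(1) i by (auto simp: PPt_mat_def scalar_prod_def lessThan_atLeast0 x_def intro!: sum.cong)
    finally show "(\<Sum>k=1..n-2. PPt n i k * x k) = 0"
      unfolding sum_atLeast1_shift by simp
  qed
  have "v $ p = 0" if "p < ?m" for p
    using x0[of "Suc p"] that by (simp add: x_def)
  with v(1) have "v = 0\<^sub>v ?m"
    by (intro eq_vecI) auto
  with v(2) show False ..
qed

lemma PPt_inv_eqI:
  assumes left: "\<And>i k. i \<in> {1..n-2} \<Longrightarrow> k \<in> {1..n-2} \<Longrightarrow>
      (\<Sum>l=1..n-2. G i l * PPt n l k) = (if i = k then 1 else 0)"
    and right: "\<And>i k. i \<in> {1..n-2} \<Longrightarrow> k \<in> {1..n-2} \<Longrightarrow>
      (\<Sum>l=1..n-2. PPt n i l * G l k) = (if i = k then 1 else 0)"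
    and outside: "\<And>i k. i \<notin> {1..n-2} \<or> k \<notin> {1..n-2} \<Longrightarrow> G i k = 0"
  shows "PPt_inv n = G"
  unfolding PPt_inv_def
proof (rule the_equality)
  fix G' assume G': "(\<forall>i\<in>{1..n-2}. \<forall>k\<in>{1..n-2}.
      (\<Sum>l=1..n-2. G' i l * PPt n l k) = (if i = k then 1 else 0))
    \<and> (\<forall>i k. (i \<notin> {1..n-2} \<or> k \<notin> {1..n-2}) \<longrightarrow> G' i k = 0)"
  show "G' = G"
  proof (intro ext)
    fix i k
    show "G' i k = G i k"
    proof (cases "i \<in> {1..n-2} \<and> k \<in> {1..n-2}")
      case True
      have "G' i k = (\<Sum>l=1..n-2. G' i l * (if l = k then 1 else 0))"
        using True by (simp add: if_distrib cong: if_cong)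
      also have "\<dots> = (\<Sum>l=1..n-2. G' i l * (\<Sum>p=1..n-2. PPt n l p * G p k))"
        using True right by (intro sum.cong) auto
      also have "\<dots> = (\<Sum>p=1..n-2. (\<Sum>l=1..n-2. G' i l * PPt n l p) * G p k)"
        by (simp add: sum_distrib_left sum_distrib_right mult.assoc) (rule sum.swap)
      also have "\<dots> = (\<Sum>p=1..n-2. if p = i then G p k else 0)"
        using True G' by (intro sum.cong) auto
      also have "\<dots> = G i k"
        using True by simp
      finally show ?thesis .
    qed (use G' outside in auto)
  qed
qed (use left outside in auto)

text \<open>\<open>PPt_inv\<close> is defined by \<open>THE\<close> over left inverses; invertibility of \<open>P P'\<close> makes it well
  defined and also a right inverse.\<close>

lemma PPt_inv_right_inverse:
  assumes "i \<in> {1..n-2}" "k \<in> {1..n-2}"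
  shows "(\<Sum>l=1..n-2. PPt n i l * PPt_inv n l k) = (if i = k then 1 else 0)"
proof -
  let ?A = "PPt_mat n" and ?m = "n - 2"
  have A: "?A \<in> carrier_mat ?m ?m"
    by (simp add: PPt_mat_def)
  have "?A \<in> Units (ring_mat TYPE(real) ?m ())"
    by (rule det_non_zero_imp_unit[OF A det_PPt_mat_nonzero])
  then obtain B where B: "B \<in> carrier_mat ?m ?m" "B * ?A = 1\<^sub>m ?m" "?A * B = 1\<^sub>m ?m"
    by (auto simp: Units_def ring_mat_def)
  define G where "G i k = (if i \<in> {1..?m} \<and> k \<in> {1..?m} then B $$ (i - 1, k - 1) else 0)" for i k
  have left: "(\<Sum>l=1..?m. G i l * PPt n l k) = (if i = k then 1 else 0)"
    if "i \<in> {1..?m}" "k \<in> {1..?m}" for i k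
  proof -
    have "(\<Sum>l=1..?m. G i l * PPt n l k) = (\<Sum>p<?m. B $$ (i - 1, p) * ?A $$ (p, k - 1))"
      unfolding sum_atLeast1_shift using that by (intro sum.cong) (auto simp: PPt_mat_def G_def)
    also have "\<dots> = (B * ?A) $$ (i - 1, k - 1)"
      using that A B(1) by (auto simp: scalar_prod_def lessThan_atLeast0)
    finally show ?thesis
      using that B(2) by auto
  qed
  have right: "(\<Sum>l=1..?m. PPt n i l * G l k) = (if i = k then 1 else 0)"
    if "i \<in> {1..?m}" "k \<in> {1..?m}" for i k
  proof -
    have "(\<Sum>l=1..?m. PPt n i l * G l k) = (\<Sum>p<?m. ?A $$ (i - 1, p) * B $$ (p, k - 1))"
      unfolding sum_atLeast1_shift using that by (intro sum.cong) (auto simp: PPt_mat_def G_def)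
    also have "\<dots> = (?A * B) $$ (i - 1, k - 1)"
      using that A B(1) by (auto simp: scalar_prod_def lessThan_atLeast0)
    finally show ?thesis
      using that B(3) by auto
  qed
  have "PPt_inv n = G"
    by (rule PPt_inv_eqI[OF left right]) (auto simp: G_def)
  then show ?thesis
    using right assms by simp
qed

lemma sum_Pmat_Qmat:
  assumes "i \<in> {1..n-2}" "s \<in> {1..n-2}"
  shows "(\<Sum>l=1..n. Pmat n i l * Qmat n l s) = (if i = s then 1 else 0)"
proof -
  have "(\<Sum>l=1..n. Pmat n i l * Qmat n l s) = (\<Sum>l=1..n. \<Sum>k=1..n-2. Pmat n i l * Pmat n k l * PPt_inv n k s)"
    by (simp add: Qmat_def sum_distrib_left mult.assoc)
  also have "\<dots> = (\<Sum>k=1..n-2. \<Sum>l=1..n. Pmat n i l * Pmat n k l * PPt_inv n k s)"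
    by (rule sum.swap)
  also have "\<dots> = (\<Sum>k=1..n-2. PPt n i k * PPt_inv n k s)"
    by (simp add: PPt_def sum_distrib_right)
  finally show ?thesis
    using PPt_inv_right_inverse[OF assms] by simp
qed

section \<open>Orthonormal sequences and diagonal operators\<close>

definition orthonormal_seq :: "(nat \<Rightarrow> 'h::real_inner) \<Rightarrow> bool" where
  "orthonormal_seq e \<longleftrightarrow> (\<forall>i j. e i \<bullet> e j = (if i = j then 1 else 0))"

lemma orthonormal_basis_imp_orthonormal_seq: "orthonormal_basis e \<Longrightarrow> orthonormal_seq e"
  by (simp add: orthonormal_basis_def orthonormal_seq_def)

lemma power2_add_le: "((x::real) + y)^2 \<le> 2 * (x^2 + y^2)"
  using sum_squares_bound[of x y] by (simp add: power2_sum)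

lemma power2_diff_le: "((x::real) - y)^2 \<le> 2 * (x^2 + y^2)"
  using power2_add_le[of x "- y"] by simp

lemma power2_norm_sum_orthonormal:
  fixes e :: "nat \<Rightarrow> 'h::real_inner"
  assumes e: "orthonormal_seq e" and "finite F"
  shows "(norm (\<Sum>j\<in>F. c j *\<^sub>R e j))^2 = (\<Sum>j\<in>F. (c j)^2)"
proof -
  have "(norm (\<Sum>j\<in>F. c j *\<^sub>R e j))^2 = (\<Sum>i\<in>F. \<Sum>j\<in>F. c i * c j * (e j \<bullet> e i))"
    by (simp add: power2_norm_eq_inner inner_sum_left inner_sum_right sum_distrib_left mult_ac)
  also have "\<dots> = (\<Sum>i\<in>F. \<Sum>j\<in>F. if j = i then c i * c j else 0)"
    using e by (intro sum.cong) (auto simp: orthonormal_seq_def)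
  also have "\<dots> = (\<Sum>i\<in>F. (c i)^2)"
    using \<open>finite F\<close> by (simp add: power2_eq_square)
  finally show ?thesis .
qed

lemma summable_orthonormal_series:
  fixes e :: "nat \<Rightarrow> 'h::{real_inner,complete_space}"
  assumes e: "orthonormal_seq e" and c: "summable (\<lambda>j. (c j)^2)"
  shows "summable (\<lambda>j. c j *\<^sub>R e j)"
proof -
  let ?S = "\<lambda>N. \<Sum>j<N. c j *\<^sub>R e j" and ?T = "\<lambda>N. \<Sum>j<N. (c j)^2"
  have dist_eq: "(dist (?S m) (?S n))^2 = dist (?T m) (?T n)" if "m \<le> n" for m n
  proof -
    have "?S n = ?S m + (\<Sum>j\<in>{m..<n}. c j *\<^sub>R e j)" "?T n = ?T m + (\<Sum>j\<in>{m..<n}. (c j)^2)"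
      using that by (simp_all add: lessThan_atLeast0 sum.atLeastLessThan_concat)
    then show ?thesis
      using power2_norm_sum_orthonormal[OF e, of "{m..<n}" c]
      by (simp add: dist_norm norm_minus_commute sum_nonneg)
  qed
  have "Cauchy ?S"
    unfolding Cauchy_def
  proof (intro allI impI)
    fix r :: real assume "r > 0"
    have "Cauchy ?T"
      using c by (simp add: summable_iff_convergent Cauchy_convergent_iff)
    then obtain N where N: "\<And>m n. m \<ge> N \<Longrightarrow> n \<ge> N \<Longrightarrow> dist (?T m) (?T n) < r^2"
      using \<open>r > 0\<close> unfolding Cauchy_def by (meson zero_less_power)
    have "dist (?S m) (?S n) < r" if "m \<ge> N" "n \<ge> N" for m n
    proof -
      have "(dist (?S m) (?S n))^2 < r^2"
        using dist_eq[of m n] dist_eq[of n m] N[OF that] N[OF that(2,1)]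
        by (cases "m \<le> n") (auto simp: dist_commute)
      then show ?thesis
        using \<open>r > 0\<close> by (simp add: power2_less_imp_less)
    qed
    then show "\<exists>N. \<forall>m\<ge>N. \<forall>n\<ge>N. dist (?S m) (?S n) < r"
      by blast
  qed
  then show ?thesis
    by (simp add: summable_iff_convergent Cauchy_convergent)
qed

lemma power2_norm_suminf_orthonormal:
  fixes e :: "nat \<Rightarrow> 'h::{real_inner,complete_space}"
  assumes e: "orthonormal_seq e" and c: "summable (\<lambda>j. (c j)^2)"
  shows "(norm (\<Sum>j. c j *\<^sub>R e j))^2 = (\<Sum>j. (c j)^2)"
proof (rule LIMSEQ_unique)
  have "(\<lambda>N. (norm (\<Sum>j<N. c j *\<^sub>R e j))^2) \<longlonglongrightarrow> (norm (\<Sum>j. c j *\<^sub>R e j))^2"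
    by (intro tendsto_intros summable_LIMSEQ summable_orthonormal_series[OF e c])
  then show "(\<lambda>N. \<Sum>j<N. (c j)^2) \<longlonglongrightarrow> (norm (\<Sum>j. c j *\<^sub>R e j))^2"
    by (simp add: power2_norm_sum_orthonormal[OF e])
  show "(\<lambda>N. \<Sum>j<N. (c j)^2) \<longlonglongrightarrow> (\<Sum>j. (c j)^2)"
    by (rule summable_LIMSEQ[OF c])
qed

lemma inner_suminf_orthonormal:
  fixes e :: "nat \<Rightarrow> 'h::{real_inner,complete_space}"
  assumes e: "orthonormal_seq e" and c: "summable (\<lambda>j. (c j)^2)"
  shows "(\<Sum>j. c j *\<^sub>R e j) \<bullet> e k = c k"
proof -
  have "(\<Sum>j. c j *\<^sub>R e j) \<bullet> e k = (\<Sum>j. (c j *\<^sub>R e j) \<bullet> e k)"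
    by (rule bounded_linear.suminf[OF bounded_linear_inner_left summable_orthonormal_series[OF e c]])
  also have "\<dots> = (\<Sum>j. if j = k then c k else 0)"
    using e by (intro suminf_cong) (auto simp: orthonormal_seq_def)
  also have "\<dots> = c k"
    by (subst suminf_finite[of "{k}"]) auto
  finally show ?thesis .
qed

lemma summable_power2_inner_orthonormal:
  fixes e :: "nat \<Rightarrow> 'h::real_inner"
  assumes e: "orthonormal_seq e"
  shows "summable (\<lambda>j. (h \<bullet> e j)^2)"
proof (rule summableI_nonneg_bounded[where x = "(norm h)^2"])
  fix N
  let ?p = "\<Sum>j<N. (h \<bullet> e j) *\<^sub>R e j"
  have "h \<bullet> ?p = (\<Sum>j<N. (h \<bullet> e j)^2)"
    by (simp add: inner_sum_right power2_eq_square)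
  moreover have "0 \<le> (norm (h - ?p))^2"
    by simp
  ultimately show "(\<Sum>j<N. (h \<bullet> e j)^2) \<le> (norm h)^2"
    using power2_norm_sum_orthonormal[OF e, of "{..<N}" "\<lambda>j. h \<bullet> e j"]
    by (simp add: power2_norm_eq_inner inner_diff_left inner_diff_right inner_commute)
qed simp

lemma orthonormal_basis_eq_0:
  assumes "orthonormal_basis e" "\<And>j. x \<bullet> e j = 0"
  shows "x = 0"
proof -
  let ?T = "{y. x \<bullet> y = 0}"
  have "span (range e) \<subseteq> ?T"
    using assms(2) by (intro span_minimal) (auto simp: subspace_def inner_add_right)
  moreover have "closed ?T"
    by (intro closed_Collect_eq continuous_intros)
  ultimately have "closure (span (range e)) \<subseteq> ?T"
    by (rule closure_minimal)
  then have "x \<in> ?T"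
    using assms(1) unfolding orthonormal_basis_def by blast
  then show ?thesis
    by simp
qed

lemma power2_dist_suminf_orthonormal:
  fixes e :: "nat \<Rightarrow> 'h::{real_inner,complete_space}"
  assumes e: "orthonormal_seq e" and a: "summable (\<lambda>j. (a j)^2)" and b: "summable (\<lambda>j. (b j)^2)"
  shows "(dist (\<Sum>j. a j *\<^sub>R e j) (\<Sum>j. b j *\<^sub>R e j))^2 = (\<Sum>j. (a j - b j)^2)"
proof -
  have "summable (\<lambda>j. (a j - b j)^2)"
    using power2_diff_le[of "a _" "b _"]
    by (intro summable_comparison_test[OF _ summable_mult[OF summable_add[OF a b], of 2]]) auto
  moreover have "(\<Sum>j. a j *\<^sub>R e j) - (\<Sum>j. b j *\<^sub>R e j) = (\<Sum>j. (a j - b j) *\<^sub>R e j)"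
    by (simp add: suminf_diff summable_orthonormal_series[OF e a] summable_orthonormal_series[OF e b]
        scaleR_diff_left)
  ultimately show ?thesis
    using power2_norm_suminf_orthonormal[OF e] by (simp add: dist_norm)
qed

lemma diag_cov_operator_eigen:
  assumes "diag_cov_operator e S lam"
  shows "S (e j) = lam j *\<^sub>R e j" "lam j > 0"
  using assms by (auto simp: diag_cov_operator_def)

text \<open>Trace class makes the eigenvalues summable, hence bounded.\<close>

lemma diag_cov_operator_eigenvalues_bounded:
  assumes e: "orthonormal_seq e" and S: "diag_cov_operator e S lam"
  obtains L where "\<And>j. \<bar>lam j\<bar> \<le> L"
proof -
  have "S (e j) \<bullet> e j = lam j" for j
    using e diag_cov_operator_eigen[OF S] by (simp add: orthonormal_seq_def)
  then have "summable lam"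
    using S by (simp add: diag_cov_operator_def)
  then have "bounded (range lam)"
    by (rule convergent_imp_bounded[OF summable_LIMSEQ_zero])
  then show ?thesis
    using that by (auto simp: bounded_iff)
qed

lemma diag_cov_operator_expansion:
  assumes ob: "orthonormal_basis e" and S: "diag_cov_operator e S lam"
  shows "summable (\<lambda>j. (lam j * (h \<bullet> e j))^2)"
    and "S h = (\<Sum>j. (lam j * (h \<bullet> e j)) *\<^sub>R e j)"
proof -
  have e: "orthonormal_seq e"
    by (rule orthonormal_basis_imp_orthonormal_seq[OF ob])
  obtain L where L: "\<And>j. \<bar>lam j\<bar> \<le> L"
    using diag_cov_operator_eigenvalues_bounded[OF e S] by blast
  have "(lam j)^2 \<le> L^2" for j
    using L[of j] by (metis abs_ge_zero power2_abs power_mono)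
  then show sm: "summable (\<lambda>j. (lam j * (h \<bullet> e j))^2)"
    by (intro summable_comparison_test[OF _ summable_mult[OF summable_power2_inner_orthonormal[OF e],
          of "L^2" h]]) (auto simp: power_mult_distrib intro!: mult_right_mono)
  have "S h \<bullet> e k = lam k * (h \<bullet> e k)" for k
    using S diag_cov_operator_eigen[OF S] by (simp add: diag_cov_operator_def)
  then show "S h = (\<Sum>j. (lam j * (h \<bullet> e j)) *\<^sub>R e j)"
    using orthonormal_basis_eq_0[OF ob, of "S h - (\<Sum>j. (lam j * (h \<bullet> e j)) *\<^sub>R e j)"]
      inner_suminf_orthonormal[OF e sm] by (simp add: inner_diff_left)
qed

section \<open>Independent centred Gaussian families\<close>

lemma integrable_normal_power:
  fixes Z :: "'a \<Rightarrow> real"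
  assumes D: "distributed M lborel Z (normal_density 0 (sqrt v))" and "v > 0"
  shows "integrable M (\<lambda>\<omega>. Z \<omega> ^ k)"
  using distributed_integrable[OF D, of "\<lambda>x. x ^ k"] integrable_normal_moment[of "sqrt v" 0 k] \<open>v > 0\<close>
  by simp

lemma normal_moments:
  fixes Z :: "'a \<Rightarrow> real"
  assumes D: "distributed M lborel Z (normal_density 0 (sqrt v))" and "v > 0"
  shows "(\<integral>\<omega>. Z \<omega> \<partial>M) = 0" and "(\<integral>\<omega>. (Z \<omega>)^2 \<partial>M) = v"
    and "(\<integral>\<omega>. (Z \<omega>)^4 \<partial>M) = 3 * v^2"
proof -
  have s: "sqrt v > 0"
    using \<open>v > 0\<close> by simp
  have "(\<integral>\<omega>. Z \<omega> \<partial>M) = (\<integral>x. normal_density 0 (sqrt v) x * x ^ (2 * 0 + 1) \<partial>lborel)"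
    using distributed_integral[OF D, of "\<lambda>x. x"] by simp
  then show "(\<integral>\<omega>. Z \<omega> \<partial>M) = 0"
    using integral_normal_moment_odd[OF s, of 0 0] by simp
  have "(\<integral>\<omega>. (Z \<omega>)^2 \<partial>M) = (\<integral>x. normal_density 0 (sqrt v) x * x ^ (2 * 1) \<partial>lborel)"
    using distributed_integral[OF D, of "\<lambda>x. x^2"] by simp
  also have "\<dots> = fact (2 * 1) / ((2 / (sqrt v)\<^sup>2) ^ 1 * fact 1)"
    using has_bochner_integral_integral_eq[OF normal_moment_even[OF s, of 0 1]] by simp
  finally show "(\<integral>\<omega>. (Z \<omega>)^2 \<partial>M) = v"
    using \<open>v > 0\<close> by (simp add: fact_numeral)
  have "(\<integral>\<omega>. (Z \<omega>)^4 \<partial>M) = (\<integral>x. normal_density 0 (sqrt v) x * x ^ (2 * 2) \<partial>lborel)"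
    using distributed_integral[OF D, of "\<lambda>x. x^4"] by simp
  also have "\<dots> = fact (2 * 2) / ((2 / (sqrt v)\<^sup>2) ^ 2 * fact 2)"
    using has_bochner_integral_integral_eq[OF normal_moment_even[OF s, of 0 2]] by simp
  finally show "(\<integral>\<omega>. (Z \<omega>)^4 \<partial>M) = 3 * v^2"
    using \<open>v > 0\<close> by (simp add: fact_numeral power2_eq_square field_simps)
qed

lemma integrable_mult_if_square_integrable:
  fixes X Y :: "'a \<Rightarrow> real"
  assumes "integrable M (\<lambda>\<omega>. (X \<omega>)^2)" "integrable M (\<lambda>\<omega>. (Y \<omega>)^2)"
    and [measurable]: "X \<in> borel_measurable M" "Y \<in> borel_measurable M"
  shows "integrable M (\<lambda>\<omega>. X \<omega> * Y \<omega>)"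
proof (rule Bochner_Integration.integrable_bound[OF Bochner_Integration.integrable_add[OF assms(1,2)]])
  show "AE \<omega> in M. norm (X \<omega> * Y \<omega>) \<le> norm ((X \<omega>)^2 + (Y \<omega>)^2)"
  proof (intro AE_I2)
    fix \<omega>
    have "2 * \<bar>X \<omega>\<bar> * \<bar>Y \<omega>\<bar> \<le> (X \<omega>)^2 + (Y \<omega>)^2"
      using sum_squares_bound[of "\<bar>X \<omega>\<bar>" "\<bar>Y \<omega>\<bar>"] by simp
    then show "norm (X \<omega> * Y \<omega>) \<le> norm ((X \<omega>)^2 + (Y \<omega>)^2)"
      using mult_nonneg_nonneg[OF abs_ge_zero abs_ge_zero, of "X \<omega>" "Y \<omega>"]
      by (simp only: real_norm_def abs_mult abs_of_nonneg[OF add_nonneg_nonneg[OF zero_le_power2 zero_le_power2]])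
  qed
qed measurable

lemma integrable_power2_le:
  fixes Z b :: "'a \<Rightarrow> real"
  assumes [measurable]: "Z \<in> borel_measurable M" and b: "integrable M b"
    and le: "\<And>\<omega>. (Z \<omega>)^2 \<le> b \<omega>"
  shows "integrable M (\<lambda>\<omega>. (Z \<omega>)^2)" and "(\<integral>\<omega>. (Z \<omega>)^2 \<partial>M) \<le> (\<integral>\<omega>. b \<omega> \<partial>M)"
proof -
  show *: "integrable M (\<lambda>\<omega>. (Z \<omega>)^2)"
    using le by (intro Bochner_Integration.integrable_bound[OF b]) (auto intro: order_trans[OF _ abs_ge_self])
  show "(\<integral>\<omega>. (Z \<omega>)^2 \<partial>M) \<le> (\<integral>\<omega>. b \<omega> \<partial>M)"
    by (intro Bochner_Integration.integral_mono * b le)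
qed

lemma integral_mult_le_power2_avg:
  fixes X Y :: "'a \<Rightarrow> real"
  assumes sq: "integrable M (\<lambda>\<omega>. (X \<omega>)^2)" "integrable M (\<lambda>\<omega>. (Y \<omega>)^2)"
    and meas: "X \<in> borel_measurable M" "Y \<in> borel_measurable M"
  shows "(\<integral>\<omega>. X \<omega> * Y \<omega> \<partial>M) \<le> ((\<integral>\<omega>. (X \<omega>)^2 \<partial>M) + (\<integral>\<omega>. (Y \<omega>)^2 \<partial>M)) / 2"
proof -
  have "(\<integral>\<omega>. X \<omega> * Y \<omega> \<partial>M) \<le> (\<integral>\<omega>. ((X \<omega>)^2 + (Y \<omega>)^2) / 2 \<partial>M)"
    using sum_squares_bound[of "X _" "Y _"]
    by (intro Bochner_Integration.integral_mono integrable_mult_if_square_integrable[OF sq meas]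
        Bochner_Integration.integrable_divide Bochner_Integration.integrable_add sq) (auto simp: field_simps)
  then show ?thesis
    using sq by simp
qed

lemma integral_power2_add_le:
  fixes X Y :: "'a \<Rightarrow> real"
  assumes "integrable M (\<lambda>\<omega>. (X \<omega>)^2)" "integrable M (\<lambda>\<omega>. (Y \<omega>)^2)"
    and "X \<in> borel_measurable M" "Y \<in> borel_measurable M"
  shows "integrable M (\<lambda>\<omega>. (X \<omega> + Y \<omega>)^2)"
    and "(\<integral>\<omega>. (X \<omega> + Y \<omega>)^2 \<partial>M) \<le> 2 * ((\<integral>\<omega>. (X \<omega>)^2 \<partial>M) + (\<integral>\<omega>. (Y \<omega>)^2 \<partial>M))"
  using integrable_power2_le[OF borel_measurable_add[OF assms(3,4)], of "\<lambda>\<omega>. 2 * ((X \<omega>)^2 + (Y \<omega>)^2)"]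
    power2_add_le assms(1,2) by simp_all

context prob_space
begin

lemma indep_var_restrict_compose:
  fixes \<zeta> :: "'i \<Rightarrow> 'a \<Rightarrow> real"
  assumes "indep_vars (\<lambda>_. borel) \<zeta> I" "A \<inter> B = {}" "A \<subseteq> I" "B \<subseteq> I"
    and "F \<in> borel_measurable (PiM A (\<lambda>_. borel))" "G \<in> borel_measurable (PiM B (\<lambda>_. borel))"
  shows "indep_var borel (\<lambda>\<omega>. F (restrict (\<lambda>k. \<zeta> k \<omega>) A)) borel (\<lambda>\<omega>. G (restrict (\<lambda>k. \<zeta> k \<omega>) B))"
  using indep_var_compose[OF indep_var_restrict[OF assms(1-4)] assms(5,6)] by (simp add: comp_def)

lemma indep_var_of_indep_vars:
  fixes \<zeta> :: "'i \<Rightarrow> 'a \<Rightarrow> real"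
  assumes "indep_vars (\<lambda>_. borel) \<zeta> I" "a \<in> I" "b \<in> I" "a \<noteq> b"
  shows "indep_var borel (\<zeta> a) borel (\<zeta> b)"
  using indep_var_restrict_compose[OF assms(1), of "{a}" "{b}" "\<lambda>x. x a" "\<lambda>x. x b"] assms
  by (simp add: measurable_component_singleton)

lemma integral_mult_eq_0_if_indep_blocks:
  fixes \<zeta> :: "'i \<Rightarrow> 'a \<Rightarrow> real" and F G :: "('i \<Rightarrow> real) \<Rightarrow> real"
  assumes "indep_vars (\<lambda>_. borel) \<zeta> I" "A \<inter> B = {}" "A \<subseteq> I" "B \<subseteq> I"
    and "F \<in> borel_measurable (PiM A (\<lambda>_. borel))" "G \<in> borel_measurable (PiM B (\<lambda>_. borel))"
    and "integrable M (\<lambda>\<omega>. F (restrict (\<lambda>k. \<zeta> k \<omega>) A))"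
    and "integrable M (\<lambda>\<omega>. G (restrict (\<lambda>k. \<zeta> k \<omega>) B))"
    and "(\<integral>\<omega>. F (restrict (\<lambda>k. \<zeta> k \<omega>) A) \<partial>M) = 0"
  shows "(\<integral>\<omega>. F (restrict (\<lambda>k. \<zeta> k \<omega>) A) * G (restrict (\<lambda>k. \<zeta> k \<omega>) B) \<partial>M) = 0"
  using indep_var_lebesgue_integral[OF indep_var_restrict_compose[OF assms(1-6)] assms(7,8)] assms(9)
  by simp

lemma integral_indep_normal_mult:
  fixes \<zeta> :: "'i \<Rightarrow> 'a \<Rightarrow> real"
  assumes ind: "indep_vars (\<lambda>_. borel) \<zeta> I"
    and D: "\<And>k. k \<in> I \<Longrightarrow> distributed M lborel (\<zeta> k) (normal_density 0 (sqrt (v k)))"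
    and v: "\<And>k. k \<in> I \<Longrightarrow> v k > 0"
    and ab: "a \<in> I" "b \<in> I"
  shows "integrable M (\<lambda>\<omega>. \<zeta> a \<omega> * \<zeta> b \<omega>)"
    and "(\<integral>\<omega>. \<zeta> a \<omega> * \<zeta> b \<omega> \<partial>M) = (if a = b then v a else 0)"
proof -
  have int: "integrable M (\<lambda>\<omega>. \<zeta> k \<omega> ^ p)" if "k \<in> I" for k p
    by (rule integrable_normal_power[OF D[OF that] v[OF that]])
  show "integrable M (\<lambda>\<omega>. \<zeta> a \<omega> * \<zeta> b \<omega>)"
    using int[OF ab(1), of 2] int[OF ab(1), of 1] int[OF ab(2), of 1]
      indep_var_integrable[OF indep_var_of_indep_vars[OF ind ab]]
    by (cases "a = b") (auto simp: power2_eq_square)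
  show "(\<integral>\<omega>. \<zeta> a \<omega> * \<zeta> b \<omega> \<partial>M) = (if a = b then v a else 0)"
    using normal_moments(1,2)[OF D[OF ab(1)] v[OF ab(1)]] int[OF ab(1), of 1] int[OF ab(2), of 1]
      indep_var_lebesgue_integral[OF indep_var_of_indep_vars[OF ind ab]]
    by (cases "a = b") (auto simp: power2_eq_square)
qed

lemma integral_indep_normal_bilinear:
  fixes \<zeta> :: "'i \<Rightarrow> 'a \<Rightarrow> real"
  assumes ind: "indep_vars (\<lambda>_. borel) \<zeta> I"
    and D: "\<And>k. k \<in> I \<Longrightarrow> distributed M lborel (\<zeta> k) (normal_density 0 (sqrt (v k)))"
    and v: "\<And>k. k \<in> I \<Longrightarrow> v k > 0"
    and "finite I"
  shows "integrable M (\<lambda>\<omega>. (\<Sum>k\<in>I. a k * \<zeta> k \<omega>) * (\<Sum>l\<in>I. b l * \<zeta> l \<omega>))"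
    and "(\<integral>\<omega>. (\<Sum>k\<in>I. a k * \<zeta> k \<omega>) * (\<Sum>l\<in>I. b l * \<zeta> l \<omega>) \<partial>M) = (\<Sum>k\<in>I. a k * b k * v k)"
proof -
  have eq: "(\<lambda>\<omega>. (\<Sum>k\<in>I. a k * \<zeta> k \<omega>) * (\<Sum>l\<in>I. b l * \<zeta> l \<omega>))
      = (\<lambda>\<omega>. \<Sum>k\<in>I. \<Sum>l\<in>I. a k * b l * (\<zeta> k \<omega> * \<zeta> l \<omega>))"
    by (simp add: sum_product mult_ac)
  have int: "integrable M (\<lambda>\<omega>. a k * b l * (\<zeta> k \<omega> * \<zeta> l \<omega>))" if "k \<in> I" "l \<in> I" for k l
    using integral_indep_normal_mult(1)[OF ind D v that] by simp
  then show "integrable M (\<lambda>\<omega>. (\<Sum>k\<in>I. a k * \<zeta> k \<omega>) * (\<Sum>l\<in>I. b l * \<zeta> l \<omega>))"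
    unfolding eq by auto
  have "(\<integral>\<omega>. (\<Sum>k\<in>I. a k * \<zeta> k \<omega>) * (\<Sum>l\<in>I. b l * \<zeta> l \<omega>) \<partial>M)
      = (\<Sum>k\<in>I. \<Sum>l\<in>I. a k * b l * (if k = l then v k else 0))"
    unfolding eq using int integral_indep_normal_mult(2)[OF ind D v]
    by (simp add: Bochner_Integration.integral_sum Bochner_Integration.integrable_sum)
  also have "\<dots> = (\<Sum>k\<in>I. a k * b k * v k)"
    using \<open>finite I\<close> by (simp add: if_distrib cong: if_cong)
  finally show "(\<integral>\<omega>. (\<Sum>k\<in>I. a k * \<zeta> k \<omega>) * (\<Sum>l\<in>I. b l * \<zeta> l \<omega>) \<partial>M) = (\<Sum>k\<in>I. a k * b k * v k)" .
qed

end

section \<open>Sums of variables uncorrelated at large lags\<close>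

lemma card_band_le: "card {k \<in> A. \<not> i + d \<le> k \<and> \<not> k + d \<le> i} \<le> 2 * d"
proof -
  have "card {k \<in> A. \<not> i + d \<le> k \<and> \<not> k + d \<le> i} \<le> card {i - d..<i + d}"
    by (intro card_mono) auto
  then show ?thesis
    by simp
qed

lemma integral_power2_sum_le_banded:
  fixes Z :: "nat \<Rightarrow> 'a \<Rightarrow> real" and B :: real and d m :: nat
  assumes meas: "\<And>i. i \<in> {1..m} \<Longrightarrow> Z i \<in> borel_measurable M"
    and sq: "\<And>i. i \<in> {1..m} \<Longrightarrow> integrable M (\<lambda>\<omega>. (Z i \<omega>)^2)"
    and bnd: "\<And>i. i \<in> {1..m} \<Longrightarrow> (\<integral>\<omega>. (Z i \<omega>)^2 \<partial>M) \<le> B"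
    and far: "\<And>i k. i \<in> {1..m} \<Longrightarrow> k \<in> {1..m} \<Longrightarrow> i + d \<le> k \<Longrightarrow> (\<integral>\<omega>. Z i \<omega> * Z k \<omega> \<partial>M) = 0"
  shows "integrable M (\<lambda>\<omega>. (\<Sum>i=1..m. Z i \<omega>)^2)"
    and "(\<integral>\<omega>. (\<Sum>i=1..m. Z i \<omega>)^2 \<partial>M) \<le> 2 * d * m * B"
proof -
  let ?near = "\<lambda>i k. \<not> i + d \<le> k \<and> \<not> k + d \<le> i"
  have eq: "(\<lambda>\<omega>. (\<Sum>i=1..m. Z i \<omega>)^2) = (\<lambda>\<omega>. \<Sum>i=1..m. \<Sum>k=1..m. Z i \<omega> * Z k \<omega>)"
    by (simp add: power2_eq_square sum_product)
  have ip: "integrable M (\<lambda>\<omega>. Z i \<omega> * Z k \<omega>)" if "i \<in> {1..m}" "k \<in> {1..m}" for i k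
    using integrable_mult_if_square_integrable[OF sq[OF that(1)] sq[OF that(2)] meas[OF that(1)] meas[OF that(2)]] .
  then show "integrable M (\<lambda>\<omega>. (\<Sum>i=1..m. Z i \<omega>)^2)"
    unfolding eq by (auto intro!: Bochner_Integration.integrable_sum)
  have B0: "0 \<le> B" if "m > 0"
  proof -
    have "0 \<le> (\<integral>\<omega>. (Z 1 \<omega>)^2 \<partial>M)"
      by (rule Bochner_Integration.integral_nonneg) simp
    moreover have "1 \<in> {1..m}"
      using that by simp
    ultimately show ?thesis
      using bnd by (meson order.trans)
  qed
  have le: "(\<integral>\<omega>. Z i \<omega> * Z k \<omega> \<partial>M) \<le> (if ?near i k then B else 0)"
    if ik: "i \<in> {1..m}" "k \<in> {1..m}" for i k
  proof (cases "?near i k")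
    case True
    then show ?thesis
      using integral_mult_le_power2_avg[OF sq[OF ik(1)] sq[OF ik(2)] meas[OF ik(1)] meas[OF ik(2)]]
        bnd[OF ik(1)] bnd[OF ik(2)] by simp
  next
    case False
    then show ?thesis
      using far[OF ik] far[OF ik(2,1)] by (auto simp: mult.commute)
  qed
  have "(\<integral>\<omega>. (\<Sum>i=1..m. Z i \<omega>)^2 \<partial>M) = (\<Sum>i=1..m. (\<integral>\<omega>. (\<Sum>k=1..m. Z i \<omega> * Z k \<omega>) \<partial>M))"
    unfolding eq by (rule Bochner_Integration.integral_sum) (auto intro!: Bochner_Integration.integrable_sum ip)
  also have "\<dots> = (\<Sum>i=1..m. \<Sum>k=1..m. (\<integral>\<omega>. Z i \<omega> * Z k \<omega> \<partial>M))"
    by (intro sum.cong refl Bochner_Integration.integral_sum ip) auto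
  also have "\<dots> \<le> (\<Sum>i=1..m. \<Sum>k=1..m. if ?near i k then B else 0)"
    using le by (intro sum_mono) auto
  also have "\<dots> = (\<Sum>i=1..m. B * card {k \<in> {1..m}. ?near i k})"
    by (simp add: sum.If_cases Int_def mult.commute)
  also have "\<dots> \<le> (\<Sum>i=1..m. B * (2 * d))"
    using B0 of_nat_mono[OF card_band_le[of "{1..m}" _ d]] by (intro sum_mono mult_left_mono) auto
  finally show "(\<integral>\<omega>. (\<Sum>i=1..m. Z i \<omega>)^2 \<partial>M) \<le> 2 * d * m * B"
    by (simp add: mult_ac)
qed

section \<open>The estimators on a model of the differenced data\<close>

definition mu_est :: "nat \<Rightarrow> (nat \<Rightarrow> real) \<Rightarrow> real" where
  "mu_est n w = - (1 / (4 * (real n - 3))) * (\<Sum>i=1..n-3. w i * w (i+1))"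

definition tau_est :: "nat \<Rightarrow> (nat \<Rightarrow> real) \<Rightarrow> real" where
  "tau_est n w = (1 / (real n - 2)) * (\<Sum>i=1..n-2. (w i)^2)
     + (3 / (2 * (real n - 3))) * (\<Sum>i=1..n-3. w i * w (i+1))"

lemma mu_hat_eq_mu_est: "mu_hat n X ej = mu_est n (PXc n X ej)"
  by (simp add: mu_hat_def mu_est_def)

lemma tau_hat_eq_tau_est: "tau_hat n X ej = tau_est n (PXc n X ej)"
  by (simp add: tau_hat_def tau_est_def)

lemma mu_est_cong: "(\<And>i. i \<in> {1..n-2} \<Longrightarrow> w i = w' i) \<Longrightarrow> mu_est n w = mu_est n w'"
  unfolding mu_est_def by (intro arg_cong2[where f = "(*)"] refl sum.cong) auto

lemma tau_est_cong: "(\<And>i. i \<in> {1..n-2} \<Longrightarrow> w i = w' i) \<Longrightarrow> tau_est n w = tau_est n w'"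
  unfolding tau_est_def by (intro arg_cong2[where f = "(+)"] arg_cong2[where f = "(*)"] refl sum.cong) auto

text \<open>A point \<open>x\<close> of the coordinate space has entries \<open>x (Inl r)\<close> and \<open>x (Inr s)\<close> standing for
  \<open>\<langle>U\<^sub>r, e\<^sub>j\<rangle>\<close> and \<open>\<langle>V\<^sub>s, e\<^sub>j\<rangle>\<close>; \<open>second_diff x i\<close> is then \<open>PX\<^sup>j(i)\<close>.\<close>

definition second_diff :: "(nat + nat \<Rightarrow> real) \<Rightarrow> nat \<Rightarrow> real" where
  "second_diff x i = x (Inl i) - 2 * x (Inl (Suc i)) + x (Inl (Suc (Suc i))) + x (Inr i)"

definition second_diff_support :: "nat \<Rightarrow> (nat + nat) set" where
  "second_diff_support i = {Inl i, Inl (Suc i), Inl (Suc (Suc i)), Inr i}"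

lemma second_diff_restrict:
  "second_diff_support i \<subseteq> S \<Longrightarrow> second_diff (restrict x S) i = second_diff x i"
  by (simp add: second_diff_def second_diff_support_def)

lemma borel_measurable_second_diff:
  assumes "second_diff_support i \<subseteq> S"
  shows "(\<lambda>y. second_diff y i) \<in> borel_measurable (PiM S (\<lambda>_. borel))"
proof -
  have m: "(\<lambda>y. y k) \<in> borel_measurable (PiM S (\<lambda>_. borel))" if "k \<in> S" for k
    using measurable_component_singleton[OF that, of "\<lambda>_. borel"] by simp
  show ?thesis
    using assms unfolding second_diff_def
    by (intro borel_measurable_add borel_measurable_diff borel_measurable_times m borel_measurable_const)
      (auto simp: second_diff_support_def)
qed

lemma power4_add_le: "((x::real) + y)^4 \<le> 8 * (x^4 + y^4)"
proof -
  have "(x + y)^4 = ((x + y)^2)^2"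
    by simp
  also have "\<dots> \<le> (2 * (x^2 + y^2))^2"
    using power2_add_le[of x y] by (intro power_mono) auto
  also have "\<dots> = 4 * (x^2 + y^2)^2"
    by (subst power_mult_distrib) simp
  also have "\<dots> \<le> 4 * (2 * ((x^2)^2 + (y^2)^2))"
    using power2_add_le[of "x^2" "y^2"] by linarith
  finally show ?thesis
    by simp
qed

lemma power4_second_diff_le:
  "(second_diff x i)^4 \<le> 64 * ((x (Inl i))^4 + 16 * (x (Inl (Suc i)))^4 + (x (Inl (Suc (Suc i))))^4 + (x (Inr i))^4)"
proof -
  let ?a = "x (Inl i)" and ?b = "- 2 * x (Inl (Suc i))" and ?c = "x (Inl (Suc (Suc i)))" and ?d = "x (Inr i)"
  have "(second_diff x i)^4 = ((?a + ?b) + (?c + ?d))^4"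
    by (simp add: second_diff_def algebra_simps)
  also have "\<dots> \<le> 8 * (8 * (?a^4 + ?b^4) + 8 * (?c^4 + ?d^4))"
    using power4_add_le[of "?a + ?b" "?c + ?d"] power4_add_le[of ?a ?b] power4_add_le[of ?c ?d] by simp
  finally show ?thesis
    by (simp add: power_mult_distrib)
qed

locale second_difference_model = prob_space +
  fixes n :: nat and mu tau :: real and \<zeta> :: "nat + nat \<Rightarrow> 'a \<Rightarrow> real"
  assumes n_ge_4: "n \<ge> 4"
    and indep: "indep_vars (\<lambda>_. borel) \<zeta> ({1..n} <+> {1..n-2})"
    and normal_Inl: "\<And>r. r \<in> {1..n} \<Longrightarrow> distributed M lborel (\<zeta> (Inl r)) (normal_density 0 (sqrt mu))"
    and normal_Inr: "\<And>s. s \<in> {1..n-2} \<Longrightarrow> distributed M lborel (\<zeta> (Inr s)) (normal_density 0 (sqrt tau))"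
    and mu_pos: "mu > 0" and tau_pos: "tau > 0"
begin

abbreviation I :: "(nat + nat) set" where "I \<equiv> {1..n} <+> {1..n-2}"

abbreviation W :: "nat \<Rightarrow> 'a \<Rightarrow> real" where "W i \<omega> \<equiv> second_diff (\<lambda>k. \<zeta> k \<omega>) i"

definition var :: "nat + nat \<Rightarrow> real" where
  "var k = (case k of Inl _ \<Rightarrow> mu | Inr _ \<Rightarrow> tau)"

lemma normal_\<zeta>: "k \<in> I \<Longrightarrow> distributed M lborel (\<zeta> k) (normal_density 0 (sqrt (var k)))"
  using normal_Inl normal_Inr by (auto simp: var_def)

lemma var_pos: "var k > 0"
  using mu_pos tau_pos by (simp add: var_def split: sum.split)

lemma second_diff_support_subset: "i \<in> {1..n-2} \<Longrightarrow> second_diff_support i \<subseteq> I"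
  using n_ge_4 by (auto simp: second_diff_support_def)

lemma borel_measurable_\<zeta>: "k \<in> I \<Longrightarrow> \<zeta> k \<in> borel_measurable M"
  using indep by (auto simp: indep_vars_def)

lemma borel_measurable_W: "i \<in> {1..n-2} \<Longrightarrow> W i \<in> borel_measurable M"
  using n_ge_4 unfolding second_diff_def
  by (intro borel_measurable_add borel_measurable_diff borel_measurable_times borel_measurable_\<zeta>
      borel_measurable_const) auto

definition W_coeff :: "nat \<Rightarrow> nat + nat \<Rightarrow> real" where
  "W_coeff i k = (case k of Inl r \<Rightarrow> Pmat n i r | Inr s \<Rightarrow> (if s = i then 1 else 0))"

lemma W_eq_sum:
  assumes "i \<in> {1..n-2}"
  shows "W i \<omega> = (\<Sum>k\<in>I. W_coeff i k * \<zeta> k \<omega>)"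
proof -
  have "(\<Sum>k\<in>I. W_coeff i k * \<zeta> k \<omega>)
      = (\<Sum>r=1..n. Pmat n i r * \<zeta> (Inl r) \<omega>) + (\<Sum>s=1..n-2. if s = i then \<zeta> (Inr s) \<omega> else 0)"
    unfolding sum.Plus[OF finite_atLeastAtMost finite_atLeastAtMost]
    by (intro arg_cong2[where f = "(+)"] sum.cong) (auto simp: W_coeff_def)
  then show ?thesis
    using sum_Pmat_row[OF assms, of "\<lambda>r. \<zeta> (Inl r) \<omega>"] assms by (simp add: second_diff_def)
qed

lemma W_covariance:
  assumes "i \<in> {1..n-2}" "l \<in> {1..n-2}"
  shows "integrable M (\<lambda>\<omega>. W i \<omega> * W l \<omega>)"
    and "(\<integral>\<omega>. W i \<omega> * W l \<omega> \<partial>M) = mu * PPt n i l + (if i = l then tau else 0)"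
proof -
  note bilinear = integral_indep_normal_bilinear[OF indep normal_\<zeta> var_pos
      finite_Plus[OF finite_atLeastAtMost finite_atLeastAtMost]]
  show "integrable M (\<lambda>\<omega>. W i \<omega> * W l \<omega>)"
    using bilinear(1) assms by (simp add: W_eq_sum)
  have "(\<integral>\<omega>. W i \<omega> * W l \<omega> \<partial>M) = (\<Sum>k\<in>I. W_coeff i k * W_coeff l k * var k)"
    using bilinear(2) assms by (simp add: W_eq_sum)
  also have "\<dots> = (\<Sum>r=1..n. Pmat n i r * Pmat n l r * mu)
      + (\<Sum>s=1..n-2. if s = i then (if i = l then tau else 0) else 0)"
    unfolding sum.Plus[OF finite_atLeastAtMost finite_atLeastAtMost]
    by (intro arg_cong2[where f = "(+)"] sum.cong) (auto simp: W_coeff_def var_def)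
  finally show "(\<integral>\<omega>. W i \<omega> * W l \<omega> \<partial>M) = mu * PPt n i l + (if i = l then tau else 0)"
    using assms by (simp add: PPt_def sum_distrib_left mult_ac)
qed

definition moment_bound :: real where "moment_bound = 3 * tau^2 + 54 * mu^2"

lemma moment_bound_nonneg: "0 \<le> moment_bound"
  by (simp add: moment_bound_def)

lemma W_fourth_moment:
  assumes i: "i \<in> {1..n-2}"
  shows "integrable M (\<lambda>\<omega>. (W i \<omega>)^4)" and "(\<integral>\<omega>. (W i \<omega>)^4 \<partial>M) \<le> 64 * moment_bound"
proof -
  let ?b = "\<lambda>\<omega>. 64 * ((\<zeta> (Inl i) \<omega>)^4 + 16 * (\<zeta> (Inl (Suc i)) \<omega>)^4 + (\<zeta> (Inl (Suc (Suc i))) \<omega>)^4 + (\<zeta> (Inr i) \<omega>)^4)"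
  have mem: "Inl i \<in> I" "Inl (Suc i) \<in> I" "Inl (Suc (Suc i)) \<in> I" "Inr i \<in> I"
    using i n_ge_4 by auto
  have int4: "integrable M (\<lambda>\<omega>. (\<zeta> k \<omega>)^4)" if "k \<in> I" for k
    by (rule integrable_normal_power[OF normal_\<zeta>[OF that] var_pos])
  note mom4 = normal_moments(3)[OF normal_\<zeta> var_pos]
  have b: "integrable M ?b"
    using int4[OF mem(1)] int4[OF mem(2)] int4[OF mem(3)] int4[OF mem(4)] by simp
  have le: "(W i \<omega>)^4 \<le> ?b \<omega>" for \<omega>
    by (rule power4_second_diff_le)
  show W4: "integrable M (\<lambda>\<omega>. (W i \<omega>)^4)"
    using borel_measurable_W[OF i] le
    by (intro Bochner_Integration.integrable_bound[OF b]) (auto intro: order_trans[OF _ abs_ge_self])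
  have "(\<integral>\<omega>. (W i \<omega>)^4 \<partial>M) \<le> (\<integral>\<omega>. ?b \<omega> \<partial>M)"
    by (intro Bochner_Integration.integral_mono W4 b le)
  also have "\<dots> = 64 * moment_bound"
    using int4[OF mem(1)] int4[OF mem(2)] int4[OF mem(3)] int4[OF mem(4)]
      mom4[OF mem(1)] mom4[OF mem(2)] mom4[OF mem(3)] mom4[OF mem(4)]
    by (simp add: var_def moment_bound_def)
  finally show "(\<integral>\<omega>. (W i \<omega>)^4 \<partial>M) \<le> 64 * moment_bound" .
qed

definition lag1_dev :: "nat \<Rightarrow> 'a \<Rightarrow> real" where
  "lag1_dev i \<omega> = W i \<omega> * W (Suc i) \<omega> + 4 * mu"

definition lag0_dev :: "nat \<Rightarrow> 'a \<Rightarrow> real" where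
  "lag0_dev i \<omega> = (W i \<omega>)^2 - (tau + 6 * mu)"

lemma lag1_dev_moments:
  assumes i: "i \<in> {1..n-3}"
  shows "lag1_dev i \<in> borel_measurable M" "integrable M (\<lambda>\<omega>. (lag1_dev i \<omega>)^2)"
    "(\<integral>\<omega>. (lag1_dev i \<omega>)^2 \<partial>M) \<le> 160 * moment_bound"
    "integrable M (lag1_dev i)" "(\<integral>\<omega>. lag1_dev i \<omega> \<partial>M) = 0"
proof -
  have i1: "i \<in> {1..n-2}" and i2: "Suc i \<in> {1..n-2}"
    using i n_ge_4 by auto
  show meas: "lag1_dev i \<in> borel_measurable M"
    unfolding lag1_dev_def using borel_measurable_W[OF i1] borel_measurable_W[OF i2] by measurable
  let ?b = "\<lambda>\<omega>. (W i \<omega>)^4 + (W (Suc i) \<omega>)^4 + 32 * mu^2"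
  have le: "(lag1_dev i \<omega>)^2 \<le> ?b \<omega>" for \<omega>
    using power2_add_le[of "W i \<omega> * W (Suc i) \<omega>" "4 * mu"] sum_squares_bound[of "(W i \<omega>)^2" "(W (Suc i) \<omega>)^2"]
    by (simp add: lag1_dev_def power_mult_distrib flip: power_mult)
  have b: "integrable M ?b"
    using W_fourth_moment(1)[OF i1] W_fourth_moment(1)[OF i2] by simp
  note sq = integrable_power2_le[OF meas b le]
  show "integrable M (\<lambda>\<omega>. (lag1_dev i \<omega>)^2)"
    by (fact sq(1))
  have "mu^2 \<le> moment_bound"
    by (simp add: moment_bound_def)
  then have "(\<integral>\<omega>. ?b \<omega> \<partial>M) \<le> 64 * moment_bound + 64 * moment_bound + 32 * moment_bound"
    using W_fourth_moment[OF i1] W_fourth_moment[OF i2] by (simp add: prob_space)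
  then show "(\<integral>\<omega>. (lag1_dev i \<omega>)^2 \<partial>M) \<le> 160 * moment_bound"
    using sq(2) by simp
  show "integrable M (lag1_dev i)"
    using square_integrable_imp_integrable[OF meas sq(1)] .
  show "(\<integral>\<omega>. lag1_dev i \<omega> \<partial>M) = 0"
    using W_covariance[OF i1 i2] PPt_Suc[OF i1 i2] by (simp add: lag1_dev_def prob_space)
qed

lemma lag0_dev_moments:
  assumes i: "i \<in> {1..n-2}"
  shows "lag0_dev i \<in> borel_measurable M" "integrable M (\<lambda>\<omega>. (lag0_dev i \<omega>)^2)"
    "(\<integral>\<omega>. (lag0_dev i \<omega>)^2 \<partial>M) \<le> 160 * moment_bound"
    "integrable M (lag0_dev i)" "(\<integral>\<omega>. lag0_dev i \<omega> \<partial>M) = 0"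
proof -
  show meas: "lag0_dev i \<in> borel_measurable M"
    unfolding lag0_dev_def using borel_measurable_W[OF i] by measurable
  let ?b = "\<lambda>\<omega>. 2 * (W i \<omega>)^4 + 2 * (tau + 6 * mu)^2"
  have le: "(lag0_dev i \<omega>)^2 \<le> ?b \<omega>" for \<omega>
    using power2_diff_le[of "(W i \<omega>)^2" "tau + 6 * mu"]
    by (simp add: lag0_dev_def flip: power_mult)
  have b: "integrable M ?b"
    using W_fourth_moment(1)[OF i] by simp
  note sq = integrable_power2_le[OF meas b le]
  show "integrable M (\<lambda>\<omega>. (lag0_dev i \<omega>)^2)"
    by (fact sq(1))
  have "(tau + 6 * mu)^2 \<le> 2 * tau^2 + 72 * mu^2"
    using power2_add_le[of tau "6 * mu"] by (simp add: power_mult_distrib)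
  moreover have "0 \<le> tau^2" "0 \<le> mu^2"
    by simp_all
  ultimately have "2 * (tau + 6 * mu)^2 \<le> 3 * moment_bound"
    unfolding moment_bound_def by (smt (verit))
  then have "(\<integral>\<omega>. ?b \<omega> \<partial>M) \<le> 128 * moment_bound + 3 * moment_bound"
    using W_fourth_moment[OF i] by (simp add: prob_space)
  then show "(\<integral>\<omega>. (lag0_dev i \<omega>)^2 \<partial>M) \<le> 160 * moment_bound"
    using sq(2) moment_bound_nonneg by simp
  show "integrable M (lag0_dev i)"
    using square_integrable_imp_integrable[OF meas sq(1)] .
  show "(\<integral>\<omega>. lag0_dev i \<omega> \<partial>M) = 0"
    using W_covariance[OF i i] PPt_diag[OF i] by (simp add: lag0_dev_def power2_eq_square prob_space)
qed

text \<open>Deviations four or more steps apart depend on disjoint sets of coordinates.\<close>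

lemma integral_lag1_dev_mult:
  assumes i: "i \<in> {1..n-3}" and k: "k \<in> {1..n-3}" and "i + 4 \<le> k"
  shows "(\<integral>\<omega>. lag1_dev i \<omega> * lag1_dev k \<omega> \<partial>M) = 0"
proof -
  define S where "S j = second_diff_support j \<union> second_diff_support (Suc j)" for j
  define F where "F j y = second_diff y j * second_diff y (Suc j) + 4 * mu" for j y
  have S: "S j \<subseteq> I" if "j \<in> {1..n-3}" for j
  proof -
    have "j \<in> {1..n-2}" "Suc j \<in> {1..n-2}"
      using that n_ge_4 by auto
    then show ?thesis
      using second_diff_support_subset by (auto simp: S_def)
  qed
  have F: "F j \<in> borel_measurable (PiM (S j) (\<lambda>_. borel))" for j
    unfolding F_def by (intro borel_measurable_add borel_measurable_times borel_measurable_second_diff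
        borel_measurable_const) (auto simp: S_def)
  have dev: "lag1_dev j = (\<lambda>\<omega>. F j (restrict (\<lambda>k. \<zeta> k \<omega>) (S j)))" for j
    by (auto simp: lag1_dev_def F_def second_diff_restrict S_def)
  have "S i \<inter> S k = {}"
    using \<open>i + 4 \<le> k\<close> by (auto simp: S_def second_diff_support_def)
  then show ?thesis
    using integral_mult_eq_0_if_indep_blocks[OF indep _ S[OF i] S[OF k] F F] lag1_dev_moments(4,5)[OF i]
      lag1_dev_moments(4)[OF k] unfolding dev by simp
qed

lemma integral_lag0_dev_mult:
  assumes i: "i \<in> {1..n-2}" and k: "k \<in> {1..n-2}" and "i + 4 \<le> k"
  shows "(\<integral>\<omega>. lag0_dev i \<omega> * lag0_dev k \<omega> \<partial>M) = 0"
proof -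
  define F where "F j y = (second_diff y j)^2 - (tau + 6 * mu)" for j y
  have F: "F j \<in> borel_measurable (PiM (second_diff_support j) (\<lambda>_. borel))" for j
    unfolding F_def by (intro borel_measurable_diff borel_measurable_power borel_measurable_second_diff
        borel_measurable_const) simp
  have dev: "lag0_dev j = (\<lambda>\<omega>. F j (restrict (\<lambda>k. \<zeta> k \<omega>) (second_diff_support j)))" for j
    by (auto simp: lag0_dev_def F_def second_diff_restrict)
  have "second_diff_support i \<inter> second_diff_support k = {}"
    using \<open>i + 4 \<le> k\<close> by (auto simp: second_diff_support_def)
  then show ?thesis
    using integral_mult_eq_0_if_indep_blocks[OF indep _ second_diff_support_subset[OF i]
        second_diff_support_subset[OF k] F F] lag0_dev_moments(4,5)[OF i] lag0_dev_moments(4)[OF k]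
    unfolding dev by simp
qed

lemma mu_est_error:
  "mu_est n (\<lambda>i. W i \<omega>) - mu = - (1 / (4 * (real n - 3))) * (\<Sum>i=1..n-3. lag1_dev i \<omega>)"
  using n_ge_4 by (simp add: mu_est_def lag1_dev_def sum.distrib of_nat_diff field_simps)

lemma tau_est_error:
  "tau_est n (\<lambda>i. W i \<omega>) - tau
    = (1 / (real n - 2)) * (\<Sum>i=1..n-2. lag0_dev i \<omega>) + (3 / (2 * (real n - 3))) * (\<Sum>i=1..n-3. lag1_dev i \<omega>)"
proof -
  have lag0: "(\<Sum>i=1..n-2. lag0_dev i \<omega>) = (\<Sum>i=1..n-2. (W i \<omega>)^2) - (real n - 2) * (tau + 6 * mu)"
    using n_ge_4 by (simp add: lag0_dev_def sum_subtractf of_nat_diff)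
  have lag1: "(\<Sum>i=1..n-3. lag1_dev i \<omega>) = (\<Sum>i=1..n-3. W i \<omega> * W (i+1) \<omega>) + (real n - 3) * (4 * mu)"
    using n_ge_4 by (simp add: lag1_dev_def sum.distrib of_nat_diff)
  have "real n - 3 > 0"
    using n_ge_4 by simp
  then have "1 / (real n - 2) * (real n - 2) = 1" "3 / (2 * (real n - 3)) * (real n - 3) = 3 / 2"
    by (simp_all add: field_simps)
  moreover have "a * D2 = 1 \<Longrightarrow> b * D3 = 3 / 2 \<Longrightarrow>
      a * S2 + b * S1 - tau = a * (S2 - D2 * (tau + 6 * mu)) + b * (S1 + D3 * (4 * mu))"
    for a b S1 S2 D2 D3 :: real
  proof -
    assume "a * D2 = 1" "b * D3 = 3 / 2"
    moreover have "a * (S2 - D2 * (tau + 6 * mu)) + b * (S1 + D3 * (4 * mu))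
        = a * S2 + b * S1 - (a * D2) * (tau + 6 * mu) + (b * D3) * (4 * mu)"
      by (simp add: algebra_simps)
    ultimately show ?thesis
      by (simp add: ac_simps)
  qed
  ultimately show ?thesis
    unfolding lag0 lag1 tau_est_def by blast
qed

lemma sum_lag1_dev:
  "integrable M (\<lambda>\<omega>. (\<Sum>i=1..n-3. lag1_dev i \<omega>)^2)"
  "(\<integral>\<omega>. (\<Sum>i=1..n-3. lag1_dev i \<omega>)^2 \<partial>M) \<le> 8 * (real n - 3) * (160 * moment_bound)"
  using integral_power2_sum_le_banded[where M = M and m = "n-3" and Z = lag1_dev and B = "160 * moment_bound" and d = 4] lag1_dev_moments integral_lag1_dev_mult n_ge_4
  by (auto simp: of_nat_diff)

lemma sum_lag0_dev:
  "integrable M (\<lambda>\<omega>. (\<Sum>i=1..n-2. lag0_dev i \<omega>)^2)"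
  "(\<integral>\<omega>. (\<Sum>i=1..n-2. lag0_dev i \<omega>)^2 \<partial>M) \<le> 8 * (real n - 2) * (160 * moment_bound)"
  using integral_power2_sum_le_banded[where M = M and m = "n-2" and Z = lag0_dev and B = "160 * moment_bound" and d = 4] lag0_dev_moments integral_lag0_dev_mult n_ge_4
  by (auto simp: of_nat_diff)


lemma mean_square_mu_est:
  "integrable M (\<lambda>\<omega>. (mu_est n (\<lambda>i. W i \<omega>) - mu)^2)"
  "(\<integral>\<omega>. (mu_est n (\<lambda>i. W i \<omega>) - mu)^2 \<partial>M) \<le> 500000 * (mu^2 + tau^2) / (real n - 3)"
proof -
  define N where "N = real n - 3"
  have N: "N > 0"
    using n_ge_4 by (simp add: N_def)
  have eq: "(\<lambda>\<omega>. (mu_est n (\<lambda>i. W i \<omega>) - mu)^2) = (\<lambda>\<omega>. (\<Sum>i=1..n-3. lag1_dev i \<omega>)^2 / (4 * N)^2)"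
    by (simp add: mu_est_error N_def power_divide)
  show "integrable M (\<lambda>\<omega>. (mu_est n (\<lambda>i. W i \<omega>) - mu)^2)"
    unfolding eq using sum_lag1_dev(1) by simp
  have "(\<integral>\<omega>. (mu_est n (\<lambda>i. W i \<omega>) - mu)^2 \<partial>M) = (\<integral>\<omega>. (\<Sum>i=1..n-3. lag1_dev i \<omega>)^2 \<partial>M) / (4 * N)^2"
    unfolding eq by simp
  also have "\<dots> \<le> 8 * N * (160 * moment_bound) / (4 * N)^2"
    using sum_lag1_dev(2) by (intro divide_right_mono) (auto simp: N_def)
  also have "\<dots> = 80 * moment_bound / N"
    using N by (simp add: power2_eq_square field_simps)
  also have "\<dots> \<le> 500000 * (mu^2 + tau^2) / N"
    using N by (intro divide_right_mono) (auto simp: moment_bound_def)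
  finally show "(\<integral>\<omega>. (mu_est n (\<lambda>i. W i \<omega>) - mu)^2 \<partial>M) \<le> 500000 * (mu^2 + tau^2) / (real n - 3)"
    by (simp add: N_def)
qed

lemma mean_square_lag_averages:
  "integrable M (\<lambda>\<omega>. ((\<Sum>i=1..n-2. lag0_dev i \<omega>) / (real n - 2))^2)"
  "(\<integral>\<omega>. ((\<Sum>i=1..n-2. lag0_dev i \<omega>) / (real n - 2))^2 \<partial>M) \<le> 1280 * moment_bound / (real n - 3)"
  "integrable M (\<lambda>\<omega>. (3 * (\<Sum>i=1..n-3. lag1_dev i \<omega>) / (2 * (real n - 3)))^2)"
  "(\<integral>\<omega>. (3 * (\<Sum>i=1..n-3. lag1_dev i \<omega>) / (2 * (real n - 3)))^2 \<partial>M) \<le> 2880 * moment_bound / (real n - 3)"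
proof -
  define N where "N = real n - 3"
  define D where "D = real n - 2"
  have N: "0 < N" "N \<le> D"
    using n_ge_4 by (auto simp: N_def D_def)
  show "integrable M (\<lambda>\<omega>. ((\<Sum>i=1..n-2. lag0_dev i \<omega>) / (real n - 2))^2)"
    "integrable M (\<lambda>\<omega>. (3 * (\<Sum>i=1..n-3. lag1_dev i \<omega>) / (2 * (real n - 3)))^2)"
    using sum_lag0_dev(1) sum_lag1_dev(1) by (simp_all add: power_divide power_mult_distrib)
  have "(\<integral>\<omega>. ((\<Sum>i=1..n-2. lag0_dev i \<omega>) / D)^2 \<partial>M) = (\<integral>\<omega>. (\<Sum>i=1..n-2. lag0_dev i \<omega>)^2 \<partial>M) / D^2"
    by (simp add: power_divide)
  also have "\<dots> \<le> 8 * D * (160 * moment_bound) / D^2"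
    using sum_lag0_dev(2) by (intro divide_right_mono) (auto simp: D_def)
  also have "\<dots> \<le> 1280 * moment_bound / N"
    using N moment_bound_nonneg by (simp add: power2_eq_square divide_left_mono)
  finally show "(\<integral>\<omega>. ((\<Sum>i=1..n-2. lag0_dev i \<omega>) / (real n - 2))^2 \<partial>M) \<le> 1280 * moment_bound / (real n - 3)"
    by (simp add: N_def D_def)
  have "(\<integral>\<omega>. (3 * (\<Sum>i=1..n-3. lag1_dev i \<omega>) / (2 * N))^2 \<partial>M)
      = 9 * (\<integral>\<omega>. (\<Sum>i=1..n-3. lag1_dev i \<omega>)^2 \<partial>M) / (2 * N)^2"
    by (simp add: power_divide power_mult_distrib)
  also have "\<dots> \<le> 9 * (8 * N * (160 * moment_bound)) / (2 * N)^2"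
    using sum_lag1_dev(2) by (intro divide_right_mono mult_left_mono) (auto simp: N_def)
  also have "\<dots> = 2880 * moment_bound / N"
    using N by (simp add: power2_eq_square field_simps)
  finally show "(\<integral>\<omega>. (3 * (\<Sum>i=1..n-3. lag1_dev i \<omega>) / (2 * (real n - 3)))^2 \<partial>M) \<le> 2880 * moment_bound / (real n - 3)"
    by (simp add: N_def)
qed

lemma mean_square_tau_est:
  "integrable M (\<lambda>\<omega>. (tau_est n (\<lambda>i. W i \<omega>) - tau)^2)"
  "(\<integral>\<omega>. (tau_est n (\<lambda>i. W i \<omega>) - tau)^2 \<partial>M) \<le> 500000 * (mu^2 + tau^2) / (real n - 3)"
proof -
  let ?x = "\<lambda>\<omega>. (\<Sum>i=1..n-2. lag0_dev i \<omega>) / (real n - 2)"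
  let ?y = "\<lambda>\<omega>. 3 * (\<Sum>i=1..n-3. lag1_dev i \<omega>) / (2 * (real n - 3))"
  have eq: "(\<lambda>\<omega>. (tau_est n (\<lambda>i. W i \<omega>) - tau)^2) = (\<lambda>\<omega>. (?x \<omega> + ?y \<omega>)^2)"
    by (simp add: tau_est_error)
  have "?x \<in> borel_measurable M" "?y \<in> borel_measurable M"
    using lag0_dev_moments(1) lag1_dev_moments(1) by (auto intro!: borel_measurable_divide borel_measurable_times
        borel_measurable_sum)
  note sum = integral_power2_add_le[OF mean_square_lag_averages(1,3) this]
  show "integrable M (\<lambda>\<omega>. (tau_est n (\<lambda>i. W i \<omega>) - tau)^2)"
    unfolding eq by (fact sum(1))
  have "(\<integral>\<omega>. (tau_est n (\<lambda>i. W i \<omega>) - tau)^2 \<partial>M)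
      \<le> 2 * (1280 * moment_bound / (real n - 3) + 2880 * moment_bound / (real n - 3))"
    unfolding eq using sum(2) mean_square_lag_averages(2,4) by simp
  also have "\<dots> = 8320 * moment_bound / (real n - 3)"
    by (simp add: add_divide_distrib[symmetric])
  also have "\<dots> \<le> 500000 * (mu^2 + tau^2) / (real n - 3)"
    using n_ge_4 by (intro divide_right_mono) (auto simp: moment_bound_def)
  finally show "(\<integral>\<omega>. (tau_est n (\<lambda>i. W i \<omega>) - tau)^2 \<partial>M) \<le> 500000 * (mu^2 + tau^2) / (real n - 3)" .
qed

end

section \<open>Convergence in probability of the operator estimators\<close>

lemma (in prob_space) conv_in_prob_if_nn_integral_le:
  fixes Z :: "nat \<Rightarrow> 'a \<Rightarrow> 'b::metric_space" and G :: "nat \<Rightarrow> 'a \<Rightarrow> ennreal"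
  assumes dist_le: "\<And>n \<omega>. \<omega> \<in> space M \<Longrightarrow> ennreal ((dist (Z n \<omega>) c)^2) \<le> G n \<omega>"
    and bound: "eventually (\<lambda>n. G n \<in> borel_measurable M \<and> (\<integral>\<^sup>+\<omega>. G n \<omega> \<partial>M) \<le> ennreal (b n)) sequentially"
    and b: "b \<longlonglongrightarrow> 0"
  shows "conv_in_prob M Z c"
  unfolding conv_in_prob_def
proof (intro allI impI)
  fix \<epsilon> \<delta> :: real assume "\<epsilon> > 0" "\<delta> > 0"
  have "eventually (\<lambda>n. b n < \<epsilon>^2 * \<delta>) sequentially"
    using b \<open>\<epsilon> > 0\<close> \<open>\<delta> > 0\<close> by (intro order_tendstoD(2)) auto
  with bound show "eventually (\<lambda>n. \<exists>A\<in>sets M. {\<omega>\<in>space M. dist (Z n \<omega>) c > \<epsilon>} \<subseteq> A \<and> measure M A < \<delta>)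
      sequentially"
  proof eventually_elim
    case (elim n)
    then have G: "G n \<in> borel_measurable M" and int: "(\<integral>\<^sup>+\<omega>. G n \<omega> \<partial>M) \<le> ennreal (b n)"
      by auto
    define A where "A = {\<omega>\<in>space M. ennreal (\<epsilon>^2) \<le> G n \<omega>}"
    have A: "A \<in> sets M"
      using G unfolding A_def by measurable
    have "{\<omega>\<in>space M. dist (Z n \<omega>) c > \<epsilon>} \<subseteq> A"
    proof
      fix \<omega> assume \<omega>: "\<omega> \<in> {\<omega>\<in>space M. dist (Z n \<omega>) c > \<epsilon>}"
      then have "ennreal (\<epsilon>^2) \<le> ennreal ((dist (Z n \<omega>) c)^2)"
        using \<open>\<epsilon> > 0\<close> by (intro ennreal_leI power_mono) auto
      also have "\<dots> \<le> G n \<omega>"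
        using \<omega> by (intro dist_le) simp
      finally show "\<omega> \<in> A"
        using \<omega> by (simp add: A_def)
    qed
    moreover have "measure M A < \<delta>"
    proof (rule ccontr)
      assume "\<not> measure M A < \<delta>"
      then have "ennreal (b n) < ennreal (\<epsilon>^2 * measure M A)"
        using elim(2) \<open>\<epsilon> > 0\<close> \<open>\<delta> > 0\<close>
        by (intro ennreal_lessI) (auto intro: order.strict_trans2 mult_left_mono)
      also have "\<dots> = (\<integral>\<^sup>+\<omega>. ennreal (\<epsilon>^2) * indicator A \<omega> \<partial>M)"
        using A by (simp add: nn_integral_cmult_indicator emeasure_eq_measure ennreal_mult)
      also have "\<dots> \<le> (\<integral>\<^sup>+\<omega>. G n \<omega> \<partial>M)"
        by (intro nn_integral_mono) (auto simp: A_def indicator_def)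
      finally show False
        using int by simp
    qed
    ultimately show ?case
      using A by blast
  qed
qed

lemma ennreal_power2_dist_diag_series_le:
  assumes ob: "orthonormal_basis e" and S: "diag_cov_operator e S lam"
  shows "ennreal ((dist (\<Sum>j. (c j * (h \<bullet> e j)) *\<^sub>R e j) (S h))^2)
    \<le> (\<Sum>j. ennreal ((c j - lam j)^2 * (h \<bullet> e j)^2))"
proof (cases "summable (\<lambda>j. (c j - lam j)^2 * (h \<bullet> e j)^2)")
  case True
  let ?a = "\<lambda>j. c j * (h \<bullet> e j)" and ?b = "\<lambda>j. lam j * (h \<bullet> e j)"
  have diff: "(?a j - ?b j)^2 = (c j - lam j)^2 * (h \<bullet> e j)^2" for j
    by (simp add: power_mult_distrib flip: left_diff_distrib)
  have b: "summable (\<lambda>j. (?b j)^2)"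
    by (rule diag_cov_operator_expansion(1)[OF ob S])
  have "norm ((?a j)^2) \<le> 2 * ((?b j)^2 + (c j - lam j)^2 * (h \<bullet> e j)^2)" for j
    using power2_add_le[of "?b j" "?a j - ?b j"] unfolding diff by simp
  then have a: "summable (\<lambda>j. (?a j)^2)"
    by (intro summable_comparison_test[OF _ summable_mult[OF summable_add[OF b True], of 2]]) blast
  have "(dist (\<Sum>j. ?a j *\<^sub>R e j) (S h))^2 = (\<Sum>j. (?a j - ?b j)^2)"
    unfolding diag_cov_operator_expansion(2)[OF ob S, of h]
    by (rule power2_dist_suminf_orthonormal[OF orthonormal_basis_imp_orthonormal_seq[OF ob] a b])
  also have "\<dots> = (\<Sum>j. (c j - lam j)^2 * (h \<bullet> e j)^2)"
    unfolding diff ..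
  finally have "(dist (\<Sum>j. ?a j *\<^sub>R e j) (S h))^2 = (\<Sum>j. (c j - lam j)^2 * (h \<bullet> e j)^2)" .
  moreover have "(\<Sum>j. ennreal ((c j - lam j)^2 * (h \<bullet> e j)^2)) = ennreal (\<Sum>j. (c j - lam j)^2 * (h \<bullet> e j)^2)"
    by (rule suminf_ennreal2[OF _ True]) simp
  ultimately show ?thesis
    by (simp only: order_refl)
next
  case False
  have "(\<Sum>j. ennreal ((c j - lam j)^2 * (h \<bullet> e j)^2)) = \<top>"
  proof (rule ccontr)
    assume "(\<Sum>j. ennreal ((c j - lam j)^2 * (h \<bullet> e j)^2)) \<noteq> \<top>"
    then have "summable (\<lambda>j. (c j - lam j)^2 * (h \<bullet> e j)^2)"
      by (intro summable_suminf_not_top) auto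
    with False show False ..
  qed
  then show ?thesis
    by (simp only: top_greatest)
qed

lemma (in prob_space) nn_integral_weighted_error_le:
  fixes est :: "nat \<Rightarrow> 'a \<Rightarrow> real"
  assumes int: "\<And>j. integrable M (\<lambda>\<omega>. (est j \<omega> - lam j)^2)"
    and bnd: "\<And>j. (\<integral>\<omega>. (est j \<omega> - lam j)^2 \<partial>M) \<le> C"
    and w: "\<And>j. 0 \<le> w j" "summable w"
  shows "(\<integral>\<^sup>+\<omega>. (\<Sum>j. ennreal ((est j \<omega> - lam j)^2 * w j)) \<partial>M) \<le> ennreal (C * (\<Sum>j. w j))"
proof -
  have "0 \<le> (\<integral>\<omega>. (est 0 \<omega> - lam 0)^2 \<partial>M)"
    by (rule Bochner_Integration.integral_nonneg) simp
  then have "0 \<le> C"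
    using bnd[of 0] by linarith
  have [measurable]: "(\<lambda>\<omega>. (est j \<omega> - lam j)^2) \<in> borel_measurable M" for j
    using int by auto
  have "(\<integral>\<^sup>+\<omega>. (\<Sum>j. ennreal ((est j \<omega> - lam j)^2 * w j)) \<partial>M)
      = (\<Sum>j. \<integral>\<^sup>+\<omega>. ennreal ((est j \<omega> - lam j)^2 * w j) \<partial>M)"
    by (intro nn_integral_suminf) measurable
  also have "\<dots> \<le> (\<Sum>j. ennreal (C * w j))"
  proof (intro suminf_le summableI)
    fix j
    have "(\<integral>\<^sup>+\<omega>. ennreal ((est j \<omega> - lam j)^2 * w j) \<partial>M) = ennreal (\<integral>\<omega>. (est j \<omega> - lam j)^2 * w j \<partial>M)"
      using int[of j] w(1)[of j] by (intro nn_integral_eq_integral) auto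
    also have "\<dots> \<le> ennreal (C * w j)"
      using bnd[of j] w(1)[of j] by (intro ennreal_leI) (simp add: mult_right_mono)
    finally show "(\<integral>\<^sup>+\<omega>. ennreal ((est j \<omega> - lam j)^2 * w j) \<partial>M) \<le> ennreal (C * w j)" .
  qed
  also have "\<dots> = ennreal (C * (\<Sum>j. w j))"
    using \<open>0 \<le> C\<close> w by (simp add: suminf_ennreal2 summable_mult suminf_mult)
  finally show ?thesis .
qed

lemma conv_in_prob_diag_estimator:
  fixes est :: "nat \<Rightarrow> nat \<Rightarrow> 'a \<Rightarrow> real"
  assumes "prob_space M" and ob: "orthonormal_basis e" and S: "diag_cov_operator e S lam"
    and int: "\<And>n j. n \<ge> 4 \<Longrightarrow> integrable M (\<lambda>\<omega>. (est n j \<omega> - lam j)^2)"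
    and bnd: "\<And>n j. n \<ge> 4 \<Longrightarrow> (\<integral>\<omega>. (est n j \<omega> - lam j)^2 \<partial>M) \<le> C / (real n - 3)"
  shows "conv_in_prob M (\<lambda>n \<omega>. \<Sum>j. (est n j \<omega> * (h \<bullet> e j)) *\<^sub>R e j) (S h)"
proof -
  interpret prob_space M by fact
  let ?w = "\<lambda>j. (h \<bullet> e j)^2"
  have w: "summable ?w"
    by (rule summable_power2_inner_orthonormal[OF orthonormal_basis_imp_orthonormal_seq[OF ob]])
  show ?thesis
  proof (rule conv_in_prob_if_nn_integral_le[OF ennreal_power2_dist_diag_series_le[OF ob S]])
    have meas: "(\<lambda>\<omega>. \<Sum>j. ennreal ((est n j \<omega> - lam j)^2 * ?w j)) \<in> borel_measurable M" if "n \<ge> 4" for n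
    proof (rule borel_measurable_suminf_order)
      fix j
      have "(\<lambda>\<omega>. (est n j \<omega> - lam j)^2) \<in> borel_measurable M"
        using int[OF that] by auto
      then show "(\<lambda>\<omega>. ennreal ((est n j \<omega> - lam j)^2 * ?w j)) \<in> borel_measurable M"
        by (intro measurable_compose[OF _ measurable_ennreal] borel_measurable_times borel_measurable_const)
    qed
    show "eventually (\<lambda>n. (\<lambda>\<omega>. \<Sum>j. ennreal ((est n j \<omega> - lam j)^2 * ?w j)) \<in> borel_measurable M
        \<and> (\<integral>\<^sup>+\<omega>. (\<Sum>j. ennreal ((est n j \<omega> - lam j)^2 * ?w j)) \<partial>M) \<le> ennreal (C / (real n - 3) * suminf ?w))
      sequentially"
      using eventually_ge_at_top[of 4]
    proof eventually_elim
      case (elim n)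
      show ?case
        using meas[OF elim] nn_integral_weighted_error_le[where est = "est n" and C = "C / (real n - 3)",
            OF int[OF elim] bnd[OF elim] zero_le_power2 w]
        by blast
    qed
    show "(\<lambda>n. C / (real n - 3) * suminf ?w) \<longlonglongrightarrow> 0"
      by (intro tendsto_mult_left_zero) real_asymp
  qed
qed

section \<open>The model and the main result\<close>

lemma PXc_eq_second_difference:
  fixes Y0 U V X :: "nat \<Rightarrow> 'h::real_inner"
  assumes i: "i \<in> {1..n-2}"
    and Y0: "(\<Sum>l=1..n. Pmat n i l *\<^sub>R Y0 l) = 0"
    and X: "\<And>l. l \<in> {1..n} \<Longrightarrow> X l = (Y0 l + (\<Sum>s=1..n-2. Qmat n l s *\<^sub>R V s)) + U l"
  shows "PXc n X ej i = U i \<bullet> ej - 2 * (U (Suc i) \<bullet> ej) + U (Suc (Suc i)) \<bullet> ej + V i \<bullet> ej"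
proof -
  have "PXc n X ej i = (\<Sum>l=1..n. Pmat n i l * (Y0 l \<bullet> ej))
      + (\<Sum>l=1..n. Pmat n i l * (\<Sum>s=1..n-2. Qmat n l s * (V s \<bullet> ej))) + (\<Sum>l=1..n. Pmat n i l * (U l \<bullet> ej))"
    unfolding PXc_def sum.distrib[symmetric]
    by (intro sum.cong) (simp_all add: X inner_add_left inner_sum_left distrib_left)
  also have "(\<Sum>l=1..n. Pmat n i l * (Y0 l \<bullet> ej)) = 0"
    using arg_cong[OF Y0, of "\<lambda>y. y \<bullet> ej"] by (simp add: inner_sum_left)
  also have "(\<Sum>l=1..n. Pmat n i l * (\<Sum>s=1..n-2. Qmat n l s * (V s \<bullet> ej)))
      = (\<Sum>s=1..n-2. (\<Sum>l=1..n. Pmat n i l * Qmat n l s) * (V s \<bullet> ej))"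
    by (simp add: sum_distrib_left sum_distrib_right mult.assoc) (rule sum.swap)
  also have "\<dots> = (\<Sum>s=1..n-2. if s = i then V s \<bullet> ej else 0)"
    using sum_Pmat_Qmat[OF i] by (intro sum.cong) auto
  also have "\<dots> = V i \<bullet> ej"
    using i by simp
  finally show ?thesis
    using sum_Pmat_row[OF i, of "\<lambda>l. U l \<bullet> ej"] by simp
qed

lemma second_difference_model_coordinates:
  fixes U V :: "nat \<Rightarrow> 'a \<Rightarrow> 'h::{real_inner,complete_space}"
  assumes "prob_space M" "n \<ge> 4"
    and indep: "prob_space.indep_vars M (\<lambda>_. borel) (\<lambda>k. case k of Inl r \<Rightarrow> U r | Inr s \<Rightarrow> V s)
      ({1..n} <+> {1..n-2})"
    and U: "\<And>r. r \<in> {1..n} \<Longrightarrow> centered_gaussian M (U r) Su"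
    and V: "\<And>s. s \<in> {1..n-2} \<Longrightarrow> centered_gaussian M (V s) Sv"
    and "Su ej \<bullet> ej > 0" "Sv ej \<bullet> ej > 0"
  shows "second_difference_model M n (Su ej \<bullet> ej) (Sv ej \<bullet> ej)
    (\<lambda>k \<omega>. (case k of Inl r \<Rightarrow> U r | Inr s \<Rightarrow> V s) \<omega> \<bullet> ej)"
proof -
  interpret prob_space M by fact
  show ?thesis
  proof unfold_locales
    have "(\<lambda>y. y \<bullet> ej) \<in> borel_measurable borel"
      by (intro borel_measurable_continuous_onI continuous_intros)
    then show "indep_vars (\<lambda>_. borel) (\<lambda>k \<omega>. (case k of Inl r \<Rightarrow> U r | Inr s \<Rightarrow> V s) \<omega> \<bullet> ej)
        ({1..n} <+> {1..n-2})"
      using indep_vars_compose2[OF indep, of "\<lambda>_ y. y \<bullet> ej" "\<lambda>_. borel"] by simp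
    show "distributed M lborel (\<lambda>\<omega>. (case Inl r of Inl r \<Rightarrow> U r | Inr s \<Rightarrow> V s) \<omega> \<bullet> ej)
        (normal_density 0 (sqrt (Su ej \<bullet> ej)))" if "r \<in> {1..n}" for r
    proof -
      have "real_centered_gaussian M (\<lambda>\<omega>. U r \<omega> \<bullet> ej) (Su ej \<bullet> ej)"
        using U[OF that] by (simp add: centered_gaussian_def)
      then show ?thesis
        using \<open>Su ej \<bullet> ej > 0\<close> by (simp add: real_centered_gaussian_def)
    qed
    show "distributed M lborel (\<lambda>\<omega>. (case Inr s of Inl r \<Rightarrow> U r | Inr s \<Rightarrow> V s) \<omega> \<bullet> ej)
        (normal_density 0 (sqrt (Sv ej \<bullet> ej)))" if "s \<in> {1..n-2}" for s
    proof -
      have "real_centered_gaussian M (\<lambda>\<omega>. V s \<omega> \<bullet> ej) (Sv ej \<bullet> ej)"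
        using V[OF that] by (simp add: centered_gaussian_def)
      then show ?thesis
        using \<open>Sv ej \<bullet> ej > 0\<close> by (simp add: real_centered_gaussian_def)
    qed
  qed fact+
qed

lemma mean_square_coordinate_estimators:
  fixes e :: "nat \<Rightarrow> 'h::{real_inner,complete_space}" and Y0 :: "nat \<Rightarrow> 'h"
    and U V X :: "nat \<Rightarrow> 'a \<Rightarrow> 'h"
  assumes "prob_space M" "n \<ge> 4" and e: "orthonormal_seq e"
    and Su: "diag_cov_operator e Su mu" and Sv: "diag_cov_operator e Sv tau"
    and Y0: "\<And>i. i \<in> {1..n-2} \<Longrightarrow> (\<Sum>l=1..n. Pmat n i l *\<^sub>R Y0 l) = 0"
    and indep: "prob_space.indep_vars M (\<lambda>_. borel) (\<lambda>k. case k of Inl r \<Rightarrow> U r | Inr s \<Rightarrow> V s)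
      ({1..n} <+> {1..n-2})"
    and U: "\<And>r. r \<in> {1..n} \<Longrightarrow> centered_gaussian M (U r) Su"
    and V: "\<And>s. s \<in> {1..n-2} \<Longrightarrow> centered_gaussian M (V s) Sv"
    and X: "\<And>i \<omega>. i \<in> {1..n} \<Longrightarrow> X i \<omega> = (Y0 i + (\<Sum>s=1..n-2. Qmat n i s *\<^sub>R V s \<omega>)) + U i \<omega>"
  shows "integrable M (\<lambda>\<omega>. (mu_hat n (\<lambda>i. X i \<omega>) (e j) - mu j)^2)"
    and "(\<integral>\<omega>. (mu_hat n (\<lambda>i. X i \<omega>) (e j) - mu j)^2 \<partial>M) \<le> 500000 * ((mu j)^2 + (tau j)^2) / (real n - 3)"
    and "integrable M (\<lambda>\<omega>. (tau_hat n (\<lambda>i. X i \<omega>) (e j) - tau j)^2)"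
    and "(\<integral>\<omega>. (tau_hat n (\<lambda>i. X i \<omega>) (e j) - tau j)^2 \<partial>M) \<le> 500000 * ((mu j)^2 + (tau j)^2) / (real n - 3)"
proof -
  let ?\<zeta> = "\<lambda>k \<omega>. (case k of Inl r \<Rightarrow> U r | Inr s \<Rightarrow> V s) \<omega> \<bullet> e j"
  have eigen: "Su (e j) \<bullet> e j = mu j" "Sv (e j) \<bullet> e j = tau j"
    using e diag_cov_operator_eigen(1)[OF Su] diag_cov_operator_eigen(1)[OF Sv]
    by (simp_all add: orthonormal_seq_def)
  then have "Su (e j) \<bullet> e j > 0" "Sv (e j) \<bullet> e j > 0"
    using diag_cov_operator_eigen(2)[OF Su] diag_cov_operator_eigen(2)[OF Sv] by simp_all
  with assms(1,2) indep U V have "second_difference_model M n (Su (e j) \<bullet> e j) (Sv (e j) \<bullet> e j) ?\<zeta>"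
    by (rule second_difference_model_coordinates)
  then interpret second_difference_model M n "mu j" "tau j" ?\<zeta>
    unfolding eigen .
  have "PXc n (\<lambda>i. X i \<omega>) (e j) i = W i \<omega>" if "i \<in> {1..n-2}" for i \<omega>
    using PXc_eq_second_difference[OF that Y0[OF that], of "\<lambda>i. X i \<omega>"] X by (simp add: second_diff_def)
  then have "mu_hat n (\<lambda>i. X i \<omega>) (e j) = mu_est n (\<lambda>i. W i \<omega>)"
    and "tau_hat n (\<lambda>i. X i \<omega>) (e j) = tau_est n (\<lambda>i. W i \<omega>)" for \<omega>
    by (auto simp: mu_hat_eq_mu_est tau_hat_eq_tau_est intro: mu_est_cong tau_est_cong)
  then show "integrable M (\<lambda>\<omega>. (mu_hat n (\<lambda>i. X i \<omega>) (e j) - mu j)^2)"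
    and "(\<integral>\<omega>. (mu_hat n (\<lambda>i. X i \<omega>) (e j) - mu j)^2 \<partial>M) \<le> 500000 * ((mu j)^2 + (tau j)^2) / (real n - 3)"
    and "integrable M (\<lambda>\<omega>. (tau_hat n (\<lambda>i. X i \<omega>) (e j) - tau j)^2)"
    and "(\<integral>\<omega>. (tau_hat n (\<lambda>i. X i \<omega>) (e j) - tau j)^2 \<partial>M) \<le> 500000 * ((mu j)^2 + (tau j)^2) / (real n - 3)"
    using mean_square_mu_est mean_square_tau_est by simp_all
qed

theorem lemma1:
  fixes M :: "'a measure"
    and e :: "nat \<Rightarrow> 'h::{real_inner,complete_space}"
    and Su Sv :: "'h \<Rightarrow> 'h" and mu tau :: "nat \<Rightarrow> real"
    and Y0 :: "nat \<Rightarrow> nat \<Rightarrow> 'h"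
    and U V X :: "nat \<Rightarrow> nat \<Rightarrow> 'a \<Rightarrow> 'h"
  assumes "prob_space M"
    and "orthonormal_basis e"
    and "diag_cov_operator e Su mu"
    and "diag_cov_operator e Sv tau"
    and "\<And>n i. n \<ge> 4 \<Longrightarrow> i \<in> {1..n-2} \<Longrightarrow> (\<Sum>l=1..n. Pmat n i l *\<^sub>R Y0 n l) = 0"
    and "\<And>n. n \<ge> 4 \<Longrightarrow> prob_space.indep_vars M (\<lambda>_. borel)
           (\<lambda>k. case k of Inl r \<Rightarrow> U n r | Inr s \<Rightarrow> V n s) ({1..n} <+> {1..n-2})"
    and "\<And>n r. n \<ge> 4 \<Longrightarrow> r \<in> {1..n} \<Longrightarrow> centered_gaussian M (U n r) Su"
    and "\<And>n s. n \<ge> 4 \<Longrightarrow> s \<in> {1..n-2} \<Longrightarrow> centered_gaussian M (V n s) Sv"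
    and "\<And>n i \<omega>. n \<ge> 4 \<Longrightarrow> i \<in> {1..n} \<Longrightarrow>
           X n i \<omega> = (Y0 n i + (\<Sum>s=1..n-2. Qmat n i s *\<^sub>R V n s \<omega>)) + U n i \<omega>"
  shows "\<forall>h. conv_in_prob M (\<lambda>n \<omega>. \<Sum>j. (mu_hat n (\<lambda>i. X n i \<omega>) (e j) * (h \<bullet> e j)) *\<^sub>R e j) (Su h)
           \<and> conv_in_prob M (\<lambda>n \<omega>. \<Sum>j. (tau_hat n (\<lambda>i. X n i \<omega>) (e j) * (h \<bullet> e j)) *\<^sub>R e j) (Sv h)"
proof -
  have e: "orthonormal_seq e"
    by (rule orthonormal_basis_imp_orthonormal_seq[OF assms(2)])
  obtain Lm Lt where "\<And>j. \<bar>mu j\<bar> \<le> Lm" "\<And>j. \<bar>tau j\<bar> \<le> Lt"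
    using diag_cov_operator_eigenvalues_bounded[OF e] assms(3,4) by metis
  then have "(mu j)^2 \<le> Lm^2" "(tau j)^2 \<le> Lt^2" for j
    by (metis abs_ge_zero power2_abs power_mono)+
  then have bound: "500000 * ((mu j)^2 + (tau j)^2) / (real n - 3) \<le> 500000 * (Lm^2 + Lt^2) / (real n - 3)"
    if "n \<ge> 4" for n j
    using that by (intro divide_right_mono add_mono mult_left_mono) auto
  note mse = mean_square_coordinate_estimators[OF assms(1) _ e assms(3,4) assms(5) assms(6-8) assms(9)]
  show ?thesis
  proof (intro allI conjI)
    fix h
    show "conv_in_prob M (\<lambda>n \<omega>. \<Sum>j. (mu_hat n (\<lambda>i. X n i \<omega>) (e j) * (h \<bullet> e j)) *\<^sub>R e j) (Su h)"
      using mse(1,2) bound by (intro conv_in_prob_diag_estimator[OF assms(1-3)]) (blast intro: order_trans)+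
    show "conv_in_prob M (\<lambda>n \<omega>. \<Sum>j. (tau_hat n (\<lambda>i. X n i \<omega>) (e j) * (h \<bullet> e j)) *\<^sub>R e j) (Sv h)"
      using mse(3,4) bound by (intro conv_in_prob_diag_estimator[OF assms(1,2,4)]) (blast intro: order_trans)+
  qed
qed

end
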